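(* Let $\lambda\in C^{1,\alpha}([0,T];M)$ with $\alpha\in(0,1]$ and $\|\lambda\|_{C^{1/2}}\le1$. There is $c=c(M,T)$ such that for all $0\le u\le s\le s+\delta\le T$ and $\epsilon\in(0,1]$, $$|f(u,s+\delta,\epsilon)-f(u,s,\epsilon)|\le c\min(u\delta^\alpha,\delta u^\alpha),$$ $$|\partial_sf(u,s+\delta,\epsilon)-\partial_sf(u,s,\epsilon)|\le c\Big(1+\frac{\epsilon}{\alpha}\Big)\min(u^\alpha,\delta^\alpha).$$
   Context: $\lambda\in C^{1,\alpha}([0,T];M)$ means $\lambda'$ exists and is continuous, $\sup|\lambda|,\sup|\lambda'|\le M$, and $|\lambda'(t)-\lambda'(s)|\le M|t-s|^\alpha$. $\|\lambda\|_{C^{1/2}}=\sup_{s\ne t}|\lambda(t)-\lambda(s)|/|t-s|^{1/2}$. For $s\in[0,T]$, $\epsilon\in(0,1]$, $f(u,s,\epsilon)$, $0\le u\le s$, is the (unique, existing) solution of $\partial_uf=\frac{-2}{f}+\lambda'(s-u)$, $f(0,s,\epsilon)=i\epsilon$; $\partial_s$ is the partial derivative in $s$. *)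

theory Defs
  imports "HOL-Analysis.Analysis"
begin

definition C1alpha :: "real \<Rightarrow> real \<Rightarrow> real \<Rightarrow> (real \<Rightarrow> real) \<Rightarrow> (real \<Rightarrow> real) \<Rightarrow> bool" where
  "C1alpha T \<alpha> M lam dlam \<longleftrightarrow>
     (\<forall>t\<in>{0..T}. (lam has_real_derivative dlam t) (at t within {0..T})) \<and>
     continuous_on {0..T} dlam \<and>
     (\<forall>t\<in>{0..T}. \<bar>lam t\<bar> \<le> M \<and> \<bar>dlam t\<bar> \<le> M) \<and>
     (\<forall>t\<in>{0..T}. \<forall>s\<in>{0..T}. \<bar>dlam t - dlam s\<bar> \<le> M * \<bar>t - s\<bar> powr \<alpha>)"

definition half_holder_le1 :: "real \<Rightarrow> (real \<Rightarrow> real) \<Rightarrow> bool" where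
  "half_holder_le1 T lam \<longleftrightarrow>
     (\<forall>s\<in>{0..T}. \<forall>t\<in>{0..T}. s \<noteq> t \<longrightarrow> \<bar>lam t - lam s\<bar> / \<bar>t - s\<bar> powr (1/2) \<le> 1)"

definition is_sol :: "(real \<Rightarrow> real) \<Rightarrow> real \<Rightarrow> real \<Rightarrow> (real \<Rightarrow> complex) \<Rightarrow> bool" where
  "is_sol dlam s \<epsilon> g \<longleftrightarrow> g 0 = \<i> * complex_of_real \<epsilon> \<and>
     (\<forall>u\<in>{0..s}. (g has_vector_derivative (-2 / g u + complex_of_real (dlam (s - u)))) (at u within {0..s}))"

definition fsol :: "(real \<Rightarrow> real) \<Rightarrow> real \<Rightarrow> real \<Rightarrow> real \<Rightarrow> complex" where
  "fsol dlam u s \<epsilon> = (THE z. \<exists>g. is_sol dlam s \<epsilon> g \<and> g u = z)"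

definition ds_fsol :: "real \<Rightarrow> (real \<Rightarrow> real) \<Rightarrow> real \<Rightarrow> real \<Rightarrow> real \<Rightarrow> complex" where
  "ds_fsol T dlam u s \<epsilon> = vector_derivative (\<lambda>s'. fsol dlam u s' \<epsilon>) (at s within {u..T})"

end

theory Submission
  imports Defs
begin

text \<open>A single solution of the backward equation stays in an explicit region: \<open>Im f \<ge> \<epsilon>\<close>,
  \<open>|Re f| \<le> M u\<close> and \<open>min u (1 / M^2) \<le> (Im f)^2 \<le> \<epsilon>^2 + 4 u\<close>. For two points \<open>z1, z2\<close> of that region the
  coefficient \<open>a = 2 / (z1 z2)\<close> of the linear equation satisfied by the difference of two solutions obeys
  \<open>Re a \<le> 16 M^2 - (6/25) / (u + \<epsilon>^2/4)\<close> and \<open>|a| \<le> C / (u + \<epsilon>^2/4)\<close>, so with the integrating factor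
  \<open>exp (16 M^2 u) (u + \<epsilon>^2/4)^(-6/25)\<close> a forcing of size \<open>1 / (u + \<epsilon>^2/4)\<close> integrates to a bounded amount.
  Applied to \<open>f(\<cdot>, s + \<delta>) - f(\<cdot>, s)\<close> after removing the driving increment \<open>\<lambda>(s) - \<lambda>(s - u)\<close>, whose
  variation in \<open>s\<close> is at most \<open>M min (u \<delta>^\<alpha>) (\<delta> u^\<alpha>)\<close>, this gives the first estimate. The derivative
  \<open>\<partial>\<^sub>s f\<close> solves the linearised equation; it is written down by variation of constants, identified as the
  derivative through a second order expansion in \<open>s\<close>, and its increment in \<open>s\<close> is estimated in the same
  way, the first estimate controlling the change of the coefficient.\<close>

lemma DERIV_within_Icc_imp_at:
  fixes f :: "real \<Rightarrow> real"
  assumes "(f has_real_derivative f') (at x within {a..b})" "a < x" "x < b"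
  shows "(f has_real_derivative f') (at x)"
  using assms by (simp add: at_within_Icc_at)

lemma has_vector_derivative_within_Icc_imp_at:
  assumes "(f has_vector_derivative f') (at x within {a..b})" "a < x" "x < (b::real)"
  shows "(f has_vector_derivative f') (at x)"
  using assms by (simp add: at_within_Icc_at)

lemma DERIV_within_Icc_imp_continuous_on:
  fixes f :: "real \<Rightarrow> real"
  assumes "\<And>x. x \<in> {a..b} \<Longrightarrow> (f has_real_derivative f' x) (at x within {a..b})"
  shows "continuous_on {a..b} f"
  unfolding continuous_on_eq_continuous_within using assms DERIV_continuous by blast

lemma decreasing_if_DERIV_within_nonpos:
  fixes \<psi> \<psi>' :: "real \<Rightarrow> real"
  assumes "a \<le> b"
    and d: "\<And>x. x \<in> {a..b} \<Longrightarrow> (\<psi> has_real_derivative \<psi>' x) (at x within {a..b})"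
    and n: "\<And>x. x \<in> {a..b} \<Longrightarrow> \<psi>' x \<le> 0"
  shows "\<psi> b \<le> \<psi> a"
proof (rule DERIV_nonpos_imp_decreasing_open[OF assms(1)])
  show "continuous_on {a..b} \<psi>" using d by (rule DERIV_within_Icc_imp_continuous_on)
  fix x assume "a < x" "x < b"
  then show "\<exists>y. (\<psi> has_real_derivative y) (at x) \<and> y \<le> 0"
    using DERIV_within_Icc_imp_at[OF d] n by force
qed

lemma increasing_if_DERIV_within_nonneg:
  fixes \<psi> \<psi>' :: "real \<Rightarrow> real"
  assumes "a \<le> b"
    and "\<And>x. x \<in> {a..b} \<Longrightarrow> (\<psi> has_real_derivative \<psi>' x) (at x within {a..b})"
    and "\<And>x. x \<in> {a..b} \<Longrightarrow> 0 \<le> \<psi>' x"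
  shows "\<psi> a \<le> \<psi> b"
  using decreasing_if_DERIV_within_nonpos[of a b "\<lambda>x. - \<psi> x" "\<lambda>x. - \<psi>' x"] assms
  by (auto intro: DERIV_minus)

lemma norm_diff_le_if_vector_derivative_le:
  fixes f f' :: "real \<Rightarrow> 'a::real_normed_vector" and \<phi> \<phi>' :: "real \<Rightarrow> real"
  assumes "a \<le> b"
    and d: "\<And>x. x \<in> {a..b} \<Longrightarrow> (f has_vector_derivative f' x) (at x within {a..b})"
    and p: "\<And>x. x \<in> {a..b} \<Longrightarrow> (\<phi> has_real_derivative \<phi>' x) (at x within {a..b})"
    and n: "\<And>x. x \<in> {a..b} \<Longrightarrow> norm (f' x) \<le> \<phi>' x"
  shows "norm (f b - f a) \<le> \<phi> b - \<phi> a"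
proof (cases "a = b")
  case False
  with assms(1) have ab: "a < b" by simp
  show ?thesis
  proof (rule differentiable_bound_general[OF ab, where f'=f' and \<phi>'=\<phi>'])
    show "continuous_on {a..b} f"
      unfolding continuous_on_eq_continuous_within using d has_vector_derivative_continuous by blast
    show "continuous_on {a..b} \<phi>" using p by (rule DERIV_within_Icc_imp_continuous_on)
    fix x assume x: "a < x" "x < b"
    show "(f has_vector_derivative f' x) (at x)"
      using has_vector_derivative_within_Icc_imp_at[OF d x] x by simp
    show "(\<phi> has_vector_derivative \<phi>' x) (at x)"
      using DERIV_within_Icc_imp_at[OF p x] x by (simp add: has_real_derivative_iff_has_vector_derivative)
    show "norm (f' x) \<le> \<phi>' x" using n x by auto
  qed
qed simp

lemma abs_diff_le_if_DERIV_le: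
  fixes f f' \<phi> \<phi>' :: "real \<Rightarrow> real"
  assumes "a \<le> b"
    and "\<And>x. x \<in> {a..b} \<Longrightarrow> (f has_real_derivative f' x) (at x within {a..b})"
    and "\<And>x. x \<in> {a..b} \<Longrightarrow> (\<phi> has_real_derivative \<phi>' x) (at x within {a..b})"
    and "\<And>x. x \<in> {a..b} \<Longrightarrow> \<bar>f' x\<bar> \<le> \<phi>' x"
  shows "\<bar>f b - f a\<bar> \<le> \<phi> b - \<phi> a"
  using norm_diff_le_if_vector_derivative_le[of a b f f' \<phi> \<phi>'] assms
  by (simp add: has_real_derivative_iff_has_vector_derivative)

lemma has_vector_derivative_exp_comp:
  fixes g :: "real \<Rightarrow> complex"
  assumes "(g has_vector_derivative g') (at x within S)"
  shows "((\<lambda>r. exp (g r)) has_vector_derivative (g' * exp (g x))) (at x within S)"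
proof -
  have "(exp has_field_derivative exp (g x)) (at (g x) within g ` S)"
    by (rule has_field_derivative_at_within) (rule DERIV_exp)
  from field_vector_diff_chain_within[OF assms this] show ?thesis by (simp add: o_def)
qed

lemma has_real_derivative_Re_comp:
  fixes g :: "real \<Rightarrow> complex"
  assumes "(g has_vector_derivative g') F"
  shows "((\<lambda>r. Re (g r)) has_real_derivative (Re g')) F"
  using bounded_linear.has_vector_derivative[OF bounded_linear_Re assms]
  by (simp add: has_real_derivative_iff_has_vector_derivative)

lemma has_real_derivative_Im_comp:
  fixes g :: "real \<Rightarrow> complex"
  assumes "(g has_vector_derivative g') F"
  shows "((\<lambda>r. Im (g r)) has_real_derivative (Im g')) F"
  using bounded_linear.has_vector_derivative[OF bounded_linear_Im assms]
  by (simp add: has_real_derivative_iff_has_vector_derivative)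

text \<open>Otherwise consider the first time the function falls to half of its initial value.\<close>
lemma ge_initial_if_DERIV_nonneg_where_pos:
  fixes \<phi> \<phi>' :: "real \<Rightarrow> real"
  assumes d: "\<And>x. x \<in> {0..s} \<Longrightarrow> (\<phi> has_real_derivative \<phi>' x) (at x within {0..s})"
    and p: "0 < \<phi> 0"
    and n: "\<And>x. x \<in> {0..s} \<Longrightarrow> 0 < \<phi> x \<Longrightarrow> 0 \<le> \<phi>' x"
    and x1: "x1 \<in> {0..s}"
  shows "\<phi> 0 \<le> \<phi> x1"
proof (rule ccontr)
  assume "\<not> \<phi> 0 \<le> \<phi> x1"
  define \<theta> where "\<theta> = \<phi> 0 / 2"
  have th: "0 < \<theta>" "\<theta> < \<phi> 0" using p by (auto simp: \<theta>_def)
  have increasing: "\<phi> 0 \<le> \<phi> t" if t: "0 \<le> t" "t \<le> x1" and above: "\<And>x. 0 \<le> x \<Longrightarrow> x < t \<Longrightarrow> \<theta> < \<phi> x"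
    for t
  proof (rule DERIV_nonneg_imp_increasing_open[OF t(1)])
    show "continuous_on {0..t} \<phi>"
      using DERIV_within_Icc_imp_continuous_on[OF d] by (rule continuous_on_subset) (use t x1 in auto)
    fix x assume x: "0 < x" "x < t"
    then have "(\<phi> has_real_derivative \<phi>' x) (at x)"
      using DERIV_within_Icc_imp_at[OF d] t x1 by force
    with x show "\<exists>y. (\<phi> has_real_derivative y) (at x) \<and> 0 \<le> y"
      using n[of x] above[of x] th t x1 by auto
  qed
  define S where "S = {0..x1} \<inter> \<phi> -` {..\<theta>}"
  have "S \<noteq> {}"
  proof
    assume "S = {}"
    then have "\<phi> 0 \<le> \<phi> x1" using x1 by (intro increasing) (force simp: S_def)+
    with \<open>\<not> \<phi> 0 \<le> \<phi> x1\<close> show False by simp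
  qed
  moreover have bdd: "bdd_below S" unfolding S_def by (auto intro: bdd_belowI[of _ 0])
  moreover have "closed S" unfolding S_def
    by (rule continuous_closed_preimage[OF continuous_on_subset[OF DERIV_within_Icc_imp_continuous_on[OF d]]])
       (use x1 in auto)
  ultimately have t0: "Inf S \<in> S" by (rule closed_contains_Inf)
  have "\<phi> 0 \<le> \<phi> (Inf S)"
  proof (rule increasing)
    fix x assume x: "0 \<le> x" "x < Inf S"
    show "\<theta> < \<phi> x"
    proof (rule ccontr)
      assume "\<not> \<theta> < \<phi> x"
      then have "x \<in> S" using x t0 by (auto simp: S_def)
      then show False using cInf_lower[OF _ bdd] x by fastforce
    qed
  qed (use t0 in \<open>auto simp: S_def\<close>)
  then show False using t0 th by (simp add: S_def)
qed

lemma has_vector_derivative_if_remainder_le: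
  fixes f :: "real \<Rightarrow> 'a::real_normed_vector"
  assumes \<alpha>: "0 < \<alpha>" and C: "0 \<le> C1" "0 \<le> C2"
    and rem: "\<And>y. y \<in> S \<Longrightarrow> norm (f y - f x - (y - x) *\<^sub>R D) \<le> (C1 * \<bar>y - x\<bar> + C2 * \<bar>y - x\<bar> powr \<alpha>) * \<bar>y - x\<bar>"
  shows "(f has_vector_derivative D) (at x within S)"
proof -
  define g where "g y = C1 * \<bar>y - x\<bar> + C2 * \<bar>y - x\<bar> powr \<alpha>" for y
  have bnd: "norm ((1 / norm (y - x)) *\<^sub>R (f y - (f x + (y - x) *\<^sub>R D))) \<le> g y" if "y \<in> S" for y
  proof (cases "y = x")
    case False
    then have pos: "0 < \<bar>y - x\<bar>" by simp
    have "norm ((1 / norm (y - x)) *\<^sub>R (f y - (f x + (y - x) *\<^sub>R D)))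
        = norm (f y - f x - (y - x) *\<^sub>R D) / \<bar>y - x\<bar>"
      by (simp add: diff_diff_eq)
    also have "\<dots> \<le> g y"
      using rem[OF that] pos unfolding g_def by (simp only: pos_divide_le_eq)
    finally show ?thesis .
  qed (use C in \<open>simp add: g_def\<close>)
  have ev: "eventually (\<lambda>y. norm ((1 / norm (y - x)) *\<^sub>R (f y - (f x + (y - x) *\<^sub>R D))) \<le> g y)
      (at x within S)"
    unfolding eventually_at_filter by (rule always_eventually) (use bnd in auto)
  have tg: "(g \<longlongrightarrow> 0) (at x within S)"
  proof -
    have t0: "((\<lambda>y. \<bar>y - x\<bar>) \<longlongrightarrow> 0) (at x within S)"
      by (rule tendsto_rabs_zero) (rule LIM_zero[OF tendsto_ident_at, of x, simplified])
    have "((\<lambda>y. \<bar>y - x\<bar> powr \<alpha>) \<longlongrightarrow> 0) (at x within S)"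
      by (rule tendsto_zero_powrI[OF t0 tendsto_const]) (use \<alpha> in auto)
    with t0 show ?thesis
      unfolding g_def[abs_def] by (rule tendsto_add_zero[OF tendsto_mult_right_zero tendsto_mult_right_zero])
  qed
  show ?thesis
    unfolding has_vector_derivative_def has_derivative_within
    using bounded_linear_scaleR_left Lim_null_comparison[OF ev tg] by blast
qed

section \<open>Linear differential inequalities\<close>

text \<open>Variation of constants: for \<open>D' = a D + b\<close> the integrating factor \<open>exp (\<integral> a)\<close> has modulus
  \<open>exp (\<integral> Re a)\<close>, which is controlled by any \<open>\<rho>\<close> with \<open>Re a \<le> \<rho>'\<close>.\<close>
lemma linear_ode_norm_bound:
  fixes D a b :: "real \<Rightarrow> complex" and \<rho> \<rho>' H h :: "real \<Rightarrow> real"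
  assumes u: "0 \<le> u"
  and dD: "\<And>r. r \<in> {0..u} \<Longrightarrow> (D has_vector_derivative (a r * D r + b r)) (at r within {0..u})"
  and ca: "continuous_on {0..u} a"
  and d\<rho>: "\<And>r. r \<in> {0..u} \<Longrightarrow> (\<rho> has_real_derivative \<rho>' r) (at r within {0..u})"
  and ra: "\<And>r. r \<in> {0..u} \<Longrightarrow> Re (a r) \<le> \<rho>' r"
  and dH: "\<And>r. r \<in> {0..u} \<Longrightarrow> (H has_real_derivative h r) (at r within {0..u})"
  and hb: "\<And>r. r \<in> {0..u} \<Longrightarrow> exp (\<rho> u - \<rho> r) * cmod (b r) \<le> h r"
  shows "cmod (D u) \<le> exp (\<rho> u - \<rho> 0) * cmod (D 0) + (H u - H 0)"
proof -
  define A where "A r = integral {0..r} a" for r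
  have dA: "(A has_vector_derivative a r) (at r within {0..u})" if "r \<in> {0..u}" for r
    unfolding A_def by (rule integral_has_vector_derivative[OF ca that])
  have A0: "A 0 = 0" by (simp add: A_def)
  have mono: "Re (A u) - \<rho> u \<le> Re (A r) - \<rho> r" if r: "r \<in> {0..u}" for r
  proof (rule decreasing_if_DERIV_within_nonpos[where \<psi> = "\<lambda>t. Re (A t) - \<rho> t" and \<psi>' = "\<lambda>t. Re (a t) - \<rho>' t"])
    show "r \<le> u" using r by auto
    fix t assume t: "t \<in> {r..u}"
    then have t': "t \<in> {0..u}" using r by auto
    show "((\<lambda>t. Re (A t) - \<rho> t) has_real_derivative Re (a t) - \<rho>' t) (at t within {r..u})"
      by (rule DERIV_subset[OF DERIV_diff[OF has_real_derivative_Re_comp[OF dA[OF t']] d\<rho>[OF t']]])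
         (use r in auto)
    show "Re (a t) - \<rho>' t \<le> 0" using ra[OF t'] by simp
  qed
  define F where "F r = exp (A u - A r) * D r" for r
  have dF: "(F has_vector_derivative exp (A u - A r) * b r) (at r within {0..u})"
    if r: "r \<in> {0..u}" for r
  proof -
    have "((\<lambda>r. exp (A u - A r)) has_vector_derivative (- a r) * exp (A u - A r)) (at r within {0..u})"
      using has_vector_derivative_exp_comp[OF has_vector_derivative_diff[OF has_vector_derivative_const dA[OF r]]]
      by simp
    from has_vector_derivative_mult[OF this dD[OF r]] show ?thesis
      unfolding F_def by (simp add: algebra_simps)
  qed
  have "cmod (F u - F 0) \<le> H u - H 0"
  proof (rule norm_diff_le_if_vector_derivative_le[OF u dF dH])
    fix r assume r: "r \<in> {0..u}"
    have "cmod (exp (A u - A r) * b r) = exp (Re (A u) - Re (A r)) * cmod (b r)"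
      by (simp add: norm_mult norm_exp_eq_Re)
    also have "\<dots> \<le> exp (\<rho> u - \<rho> r) * cmod (b r)"
      using mono[OF r] by (intro mult_right_mono) auto
    also have "\<dots> \<le> h r" by (rule hb[OF r])
    finally show "cmod (exp (A u - A r) * b r) \<le> h r" .
  qed
  moreover have "cmod (F 0) \<le> exp (\<rho> u - \<rho> 0) * cmod (D 0)"
    using mono[of 0] u by (simp add: F_def A0 norm_mult norm_exp_eq_Re mult_right_mono)
  ultimately show ?thesis using norm_triangle_ineq2[of "F u" "F 0"] by (simp add: F_def)
qed

lemma linear_ode_norm_bound_log_weight_gen:
  fixes D a b :: "real \<Rightarrow> complex" and H h :: "real \<Rightarrow> real"
  assumes u: "0 \<le> u" "u \<le> T'" and c: "0 < c" and K: "0 \<le> K"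
  and dD: "\<And>r. r \<in> {0..u} \<Longrightarrow> (D has_vector_derivative (a r * D r + b r)) (at r within {0..u})"
  and ca: "continuous_on {0..u} a"
  and ra: "\<And>r. r \<in> {0..u} \<Longrightarrow> Re (a r) \<le> K - \<kappa> / (r + c)"
  and dH: "\<And>r. r \<in> {0..u} \<Longrightarrow> (H has_real_derivative h r) (at r within {0..u})"
  and hb: "\<And>r. r \<in> {0..u} \<Longrightarrow> exp (K * T') * ((r + c) powr \<kappa> / (u + c) powr \<kappa>) * cmod (b r) \<le> h r"
  and \<kappa>: "0 < \<kappa>"
  shows "cmod (D u) \<le> exp (K * T') * cmod (D 0) + (H u - H 0)"
proof -
  define \<rho> where "\<rho> r = K * r - \<kappa> * ln (r + c)" for r
  have exp_\<rho>: "exp (\<rho> u - \<rho> r) \<le> exp (K * T') * ((r + c) powr \<kappa> / (u + c) powr \<kappa>)" if "r \<in> {0..u}" for r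
  proof -
    have rc: "0 < r + c" "0 < u + c" using that c by auto
    have "exp (\<rho> u - \<rho> r) = exp (K * (u - r)) * ((r + c) powr \<kappa> / (u + c) powr \<kappa>)"
      using rc by (simp add: \<rho>_def powr_def exp_diff[symmetric] exp_add[symmetric] algebra_simps)
    also have "\<dots> \<le> exp (K * T') * ((r + c) powr \<kappa> / (u + c) powr \<kappa>)"
      using that u K by (intro mult_right_mono) (auto intro!: mult_left_mono)
    finally show ?thesis .
  qed
  have "cmod (D u) \<le> exp (\<rho> u - \<rho> 0) * cmod (D 0) + (H u - H 0)"
  proof (rule linear_ode_norm_bound[OF u(1) dD ca _ ra dH])
    fix r assume r: "r \<in> {0..u}"
    show "(\<rho> has_real_derivative (K - \<kappa> / (r + c))) (at r within {0..u})"
      unfolding \<rho>_def using r c by (auto intro!: derivative_eq_intros simp: field_simps)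
    show "exp (\<rho> u - \<rho> r) * cmod (b r) \<le> h r"
      using exp_\<rho>[OF r] hb[OF r] by (meson mult_right_mono norm_ge_zero order_trans)
  qed
  moreover have "exp (\<rho> u - \<rho> 0) \<le> exp (K * T')"
  proof -
    have "exp (\<rho> u - \<rho> 0) \<le> exp (K * T') * ((0 + c) powr \<kappa> / (u + c) powr \<kappa>)"
      using exp_\<rho>[of 0] u by simp
    also have "\<dots> \<le> exp (K * T') * 1" using u c \<kappa> by (intro mult_left_mono) (auto simp: powr_mono2)
    finally show ?thesis by simp
  qed
  then have "exp (\<rho> u - \<rho> 0) * cmod (D 0) \<le> exp (K * T') * cmod (D 0)"
    by (rule mult_right_mono) simp
  ultimately show ?thesis by simp
qed

text \<open>The weight \<open>exp (K r) / (r + c) powr \<kappa>\<close> absorbs a coefficient with \<open>Re a \<le> K - \<kappa> / (r + c)\<close>;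
  against it a forcing of size \<open>1 / (r + c)\<close> integrates to a bounded amount.\<close>
lemma linear_ode_norm_bound_log_weight:
  fixes D a b :: "real \<Rightarrow> complex"
  assumes u: "0 \<le> u" "u \<le> T'"
  and c: "0 < c" and \<kappa>: "0 < \<kappa>" and K: "0 \<le> K"
  and B: "0 \<le> B1" "0 \<le> B2" "0 \<le> B3"
  and dD: "\<And>r. r \<in> {0..u} \<Longrightarrow> (D has_vector_derivative (a r * D r + b r)) (at r within {0..u})"
  and ca: "continuous_on {0..u} a"
  and ra: "\<And>r. r \<in> {0..u} \<Longrightarrow> Re (a r) \<le> K - \<kappa> / (r + c)"
  and bb: "\<And>r. r \<in> {0..u} \<Longrightarrow> cmod (b r) \<le> B1 / (r + c) + B2 / sqrt (r + c) + B3"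
  shows "cmod (D u) \<le> exp (K * T') * (cmod (D 0) + B1 / \<kappa> + 2 * B2 * sqrt (T' + c) + B3 * T')"
proof -
  define E where "E = exp (K * T')"
  define H where "H r = E * (B1 * (r + c) powr \<kappa> / (\<kappa> * (u + c) powr \<kappa>) + 2 * B2 * sqrt (r + c) + B3 * r)"
    for r
  have "cmod (D u) \<le> E * cmod (D 0) + (H u - H 0)"
    unfolding E_def
  proof (rule linear_ode_norm_bound_log_weight_gen[OF u c K dD ca ra _ _ \<kappa>,
        where h = "\<lambda>r. E * (B1 * (r + c) powr (\<kappa> - 1) / (u + c) powr \<kappa> + B2 / sqrt (r + c) + B3)"])
    fix r assume r: "r \<in> {0..u}"
    have rc: "0 < r + c" "0 < u + c" using r c by auto
    have "(H has_real_derivative E * (B1 * (\<kappa> * (r + c) powr (\<kappa> - 1)) / (\<kappa> * (u + c) powr \<kappa>)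
        + 2 * B2 * (inverse (sqrt (r + c)) / 2) + B3)) (at r)"
      unfolding H_def using rc by (auto intro!: derivative_eq_intros)
    then show "(H has_real_derivative E * (B1 * (r + c) powr (\<kappa> - 1) / (u + c) powr \<kappa> + B2 / sqrt (r + c) + B3))
        (at r within {0..u})"
      using \<kappa> by (simp add: divide_simps has_field_derivative_at_within)
    define P where "P = (r + c) powr \<kappa> / (u + c) powr \<kappa>"
    have P: "0 \<le> P" "P \<le> 1" using rc r \<kappa> by (auto simp: P_def powr_mono2)
    have "E * P * cmod (b r) \<le> E * P * (B1 / (r + c) + B2 / sqrt (r + c) + B3)"
      using bb[OF r] P by (intro mult_left_mono) (auto simp: E_def)
    also have "\<dots> = E * (B1 * (P / (r + c)) + P * (B2 / sqrt (r + c) + B3))"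
      by (simp add: algebra_simps)
    also have "\<dots> \<le> E * (B1 * (P / (r + c)) + 1 * (B2 / sqrt (r + c) + B3))"
      using P B rc by (intro mult_left_mono add_mono mult_right_mono) (auto simp: E_def)
    also have "P / (r + c) = (r + c) powr (\<kappa> - 1) / (u + c) powr \<kappa>"
      using rc by (simp add: P_def powr_diff)
    finally show "exp (K * T') * ((r + c) powr \<kappa> / (u + c) powr \<kappa>) * cmod (b r)
        \<le> E * (B1 * (r + c) powr (\<kappa> - 1) / (u + c) powr \<kappa> + B2 / sqrt (r + c) + B3)"
      by (simp add: E_def P_def add.assoc)
  qed
  moreover have "H u - H 0 \<le> E * (B1 / \<kappa> + 2 * B2 * sqrt (T' + c) + B3 * T')"
  proof -
    have "H u - H 0 = E * (B1 / \<kappa> - B1 * c powr \<kappa> / (\<kappa> * (u + c) powr \<kappa>)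
       + 2 * B2 * (sqrt (u + c) - sqrt c) + B3 * u)"
      unfolding H_def using u c \<kappa> by (simp add: field_simps)
    also have "\<dots> \<le> E * (B1 / \<kappa> + 2 * B2 * sqrt (T' + c) + B3 * T')"
    proof (rule mult_left_mono, intro add_mono)
      show "B1 / \<kappa> - B1 * c powr \<kappa> / (\<kappa> * (u + c) powr \<kappa>) \<le> B1 / \<kappa>"
        using B \<kappa> by (simp add: divide_nonneg_nonneg)
      have "sqrt (u + c) - sqrt c \<le> sqrt (T' + c)" using u c by (smt (verit) real_sqrt_ge_zero real_sqrt_le_iff)
      then show "2 * B2 * (sqrt (u + c) - sqrt c) \<le> 2 * B2 * sqrt (T' + c)"
        using B by (intro mult_left_mono) auto
      show "B3 * u \<le> B3 * T'" using B u by (simp add: mult_left_mono)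
    qed (simp add: E_def)
    finally show ?thesis .
  qed
  ultimately show ?thesis unfolding E_def by (simp add: algebra_simps)
qed

section \<open>Existence for Lipschitz equations\<close>

text \<open>The vector field \<open>z \<mapsto> -2 / z\<close> is Lipschitz on \<open>Im z \<ge> \<epsilon>\<close>; composing with the projection onto that
  half plane gives a globally Lipschitz field, for which Picard iteration applies.\<close>
definition lift_Im :: "real \<Rightarrow> complex \<Rightarrow> complex" where
  "lift_Im \<epsilon> z = Complex (Re z) (max (Im z) \<epsilon>)"

lemma Re_lift_Im [simp]: "Re (lift_Im \<epsilon> z) = Re z"
  and Im_lift_Im [simp]: "Im (lift_Im \<epsilon> z) = max (Im z) \<epsilon>"
  by (simp_all add: lift_Im_def)

lemma lift_Im_eq_self: "\<epsilon> \<le> Im z \<Longrightarrow> lift_Im \<epsilon> z = z"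
  by (simp add: complex_eq_iff)

lemma norm_lift_Im_ge: "\<epsilon> \<le> cmod (lift_Im \<epsilon> z)"
  using abs_Im_le_cmod[of "lift_Im \<epsilon> z"] by simp

lemma lift_Im_nonzero: "0 < \<epsilon> \<Longrightarrow> lift_Im \<epsilon> z \<noteq> 0"
  using norm_lift_Im_ge[of \<epsilon> z] by auto

lemma continuous_on_lift_Im: "continuous_on A (lift_Im \<epsilon>)"
  unfolding lift_Im_def by (intro continuous_intros)

lemma norm_lift_Im_diff_le: "cmod (lift_Im \<epsilon> z1 - lift_Im \<epsilon> z2) \<le> cmod (z1 - z2)"
proof -
  have "\<bar>max (Im z1) \<epsilon> - max (Im z2) \<epsilon>\<bar> \<le> \<bar>Im z1 - Im z2\<bar>" by (simp add: max_def)
  then have "(max (Im z1) \<epsilon> - max (Im z2) \<epsilon>)^2 \<le> (Im z1 - Im z2)^2"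
    by (metis abs_ge_zero power2_abs power_mono)
  then have "(cmod (lift_Im \<epsilon> z1 - lift_Im \<epsilon> z2))^2 \<le> (cmod (z1 - z2))^2"
    by (simp add: cmod_power2)
  then show ?thesis by (rule power2_le_imp_le) simp
qed

lemma norm_two_div_lift_Im_diff_le:
  assumes "0 < \<epsilon>"
  shows "cmod (2 / lift_Im \<epsilon> z1 - 2 / lift_Im \<epsilon> z2) \<le> 2 / \<epsilon>^2 * cmod (z1 - z2)"
proof -
  define w1 w2 where "w1 = lift_Im \<epsilon> z1" and "w2 = lift_Im \<epsilon> z2"
  have w: "\<epsilon> \<le> cmod w1" "\<epsilon> \<le> cmod w2" unfolding w1_def w2_def by (rule norm_lift_Im_ge)+
  have "w1 \<noteq> 0" "w2 \<noteq> 0" unfolding w1_def w2_def using lift_Im_nonzero[OF assms] by auto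
  then have "2 / w1 - 2 / w2 = 2 * (w2 - w1) / (w1 * w2)" by (simp add: field_simps)
  then have "cmod (2 / w1 - 2 / w2) = 2 * cmod (w2 - w1) / (cmod w1 * cmod w2)"
    by (simp only: norm_divide norm_mult) simp
  also have "\<dots> \<le> 2 * cmod (z1 - z2) / (\<epsilon> * \<epsilon>)"
    using w assms norm_lift_Im_diff_le[of \<epsilon> z2 z1] norm_minus_commute[of z1 z2]
    by (intro frac_le mult_mono) (auto simp: w1_def w2_def)
  finally show ?thesis by (simp add: w1_def w2_def power2_eq_square)
qed

lemma norm_integral_le_exp_weight:
  fixes G :: "real \<Rightarrow> 'a::banach"
  assumes v: "0 \<le> v" and G: "continuous_on {0..v} G" and d: "0 \<le> d"
    and bound: "\<And>t. t \<in> {0..v} \<Longrightarrow> norm (G t) \<le> d * L * exp (2 * L * t)"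
  shows "norm (integral {0..v} G) \<le> d / 2 * exp (2 * L * v)"
proof -
  have "norm (integral {0..v} G - integral {0..0} G) \<le> d / 2 * exp (2 * L * v) - d / 2 * exp (2 * L * 0)"
  proof (rule norm_diff_le_if_vector_derivative_le[OF v])
    fix t assume "t \<in> {0..v}"
    then show "((\<lambda>t. integral {0..t} G) has_vector_derivative G t) (at t within {0..v})"
      by (rule integral_has_vector_derivative[OF G])
    show "((\<lambda>t. d / 2 * exp (2 * L * t)) has_real_derivative d * L * exp (2 * L * t)) (at t within {0..v})"
      by (auto intro!: derivative_eq_intros)
  qed (rule bound)
  then show ?thesis using d by simp
qed

lemma norm_integral_diff_le_exp_weight:
  fixes F :: "real \<Rightarrow> complex \<Rightarrow> complex" and h1 h2 :: "real \<Rightarrow> complex"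
  assumes v: "0 \<le> v" and L: "0 < L"
    and cont: "\<And>h. h \<in> {h1, h2} \<Longrightarrow> continuous_on {0..v} (\<lambda>t. F t (complex_of_real (exp (2 * L * t)) * h t))"
    and F_lip: "\<And>t z1 z2. t \<in> {0..v} \<Longrightarrow> cmod (F t z1 - F t z2) \<le> L * cmod (z1 - z2)"
    and h: "\<And>t. t \<in> {0..v} \<Longrightarrow> cmod (h1 t - h2 t) \<le> d"
  shows "cmod (integral {0..v} (\<lambda>t. F t (complex_of_real (exp (2 * L * t)) * h1 t))
      - integral {0..v} (\<lambda>t. F t (complex_of_real (exp (2 * L * t)) * h2 t))) \<le> d / 2 * exp (2 * L * v)"
proof -
  define G where "G h t = F t (complex_of_real (exp (2 * L * t)) * h t)" for h t
  have G: "continuous_on {0..v} (G h1)" "continuous_on {0..v} (G h2)" using cont by (auto simp: G_def[abs_def])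
  have "integral {0..v} (G h1) - integral {0..v} (G h2) = integral {0..v} (\<lambda>t. G h1 t - G h2 t)"
    by (intro integral_diff[symmetric] integrable_continuous_interval G)
  also have "cmod \<dots> \<le> d / 2 * exp (2 * L * v)"
  proof (rule norm_integral_le_exp_weight[OF v])
    show "continuous_on {0..v} (\<lambda>t. G h1 t - G h2 t)" by (intro continuous_intros G)
    show "0 \<le> d" using h[of 0] v by (meson atLeastAtMost_iff norm_ge_zero order_refl order_trans)
    fix t assume t: "t \<in> {0..v}"
    have "cmod (G h1 t - G h2 t) \<le> L * cmod (complex_of_real (exp (2 * L * t)) * (h1 t - h2 t))"
      using F_lip[OF t] unfolding G_def by (simp add: right_diff_distrib)
    also have "\<dots> \<le> L * (exp (2 * L * t) * d)"
      using h[OF t] L by (simp add: norm_mult mult_left_mono)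
    finally show "cmod (G h1 t - G h2 t) \<le> d * L * exp (2 * L * t)" by (simp add: algebra_simps)
  qed
  finally show ?thesis unfolding G_def .
qed

text \<open>Global existence for a Lipschitz ODE by Banach's fixed point theorem, in the sup norm weighted by
  \<open>exp (-2 L t)\<close>, in which the Picard operator is a \<open>1/2\<close>-contraction.\<close>
lemma lipschitz_ode_exists:
  fixes F :: "real \<Rightarrow> complex \<Rightarrow> complex"
  assumes s: "0 \<le> s" and L: "0 < L"
    and F_cont: "\<And>h. continuous_on {0..s} h \<Longrightarrow> continuous_on {0..s} (\<lambda>v. F v (h v))"
    and F_lip: "\<And>v z1 z2. v \<in> {0..s} \<Longrightarrow> cmod (F v z1 - F v z2) \<le> L * cmod (z1 - z2)"
  shows "\<exists>g. g 0 = z0 \<and> (\<forall>u\<in>{0..s}. (g has_vector_derivative F u (g u)) (at u within {0..s}))"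
proof -
  define w where "w v = exp (2 * L * v)" for v :: real
  have wpos: "0 < w v" for v by (simp add: w_def)
  define G where "G h v = F v (complex_of_real (w v) * apply_bcontfun h v)" for h :: "real \<Rightarrow>\<^sub>C complex" and v
  have G_cont: "continuous_on {0..s} (G h)" for h
    unfolding G_def w_def by (rule F_cont) (auto intro!: continuous_intros)
  define I where "I h u = integral {0..u} (G h)" for h u
  have dI: "(I h has_vector_derivative G h u) (at u within {0..s})" if "u \<in> {0..s}" for h u
    unfolding I_def by (rule integral_has_vector_derivative[OF G_cont that])
  define \<phi> where "\<phi> h u = (z0 + I h u) / complex_of_real (w u)" for h u
  have "continuous_on {0..s} (\<phi> h)" for h
    unfolding \<phi>_def w_def using continuous_on_vector_derivative[OF dI] by (intro continuous_intros) auto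
  then have "\<exists>g::real \<Rightarrow>\<^sub>C complex. \<forall>u. apply_bcontfun g u = \<phi> h (clamp 0 s u)" for h
    by (metis continuous_on_cbox_bcontfunE cbox_interval)
  then obtain \<Phi> where \<Phi>: "\<And>h u. apply_bcontfun (\<Phi> h) u = \<phi> h (clamp 0 s u)" by metis
  have clamp: "clamp 0 s u \<in> {0..s}" "u \<in> {0..s} \<Longrightarrow> clamp 0 s u = u" for u
    using clamp_in_interval[of 0 s u] clamp_cancel_cbox[of u 0 s] s by auto
  have "dist (\<Phi> h1) (\<Phi> h2) \<le> 1/2 * dist h1 h2" for h1 h2
  proof (rule dist_bound)
    fix u
    define v where "v = clamp 0 s u"
    have v: "v \<in> {0..s}" unfolding v_def by (rule clamp)
    have "cmod (I h1 v - I h2 v) \<le> dist h1 h2 / 2 * w v"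
      unfolding I_def G_def w_def
    proof (rule norm_integral_diff_le_exp_weight[OF _ L])
      fix h assume "h \<in> {apply_bcontfun h1, apply_bcontfun h2}"
      then show "continuous_on {0..v} (\<lambda>t. F t (complex_of_real (exp (2 * L * t)) * h t))"
        using continuous_on_subset[OF G_cont] v by (auto simp: G_def w_def)
    qed (use v F_lip dist_bounded[of h1 _ h2] in \<open>auto simp: dist_norm\<close>)
    moreover have "\<phi> h1 v - \<phi> h2 v = (I h1 v - I h2 v) / complex_of_real (w v)"
      unfolding \<phi>_def using wpos[of v] by (simp add: field_simps)
    ultimately have "cmod (\<phi> h1 v - \<phi> h2 v) \<le> dist h1 h2 / 2"
      using wpos[of v] by (simp add: norm_divide divide_le_eq)
    then show "dist (apply_bcontfun (\<Phi> h1) u) (apply_bcontfun (\<Phi> h2) u) \<le> 1/2 * dist h1 h2"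
      by (simp add: \<Phi> dist_norm v_def)
  qed
  then obtain h where h: "\<Phi> h = h"
    using banach_fix_type[of "1/2" \<Phi>] by auto
  define g where "g u = z0 + I h u" for u
  have "complex_of_real (w u) * apply_bcontfun h u = g u" if "u \<in> {0..s}" for u
    using \<Phi>[of h u] clamp(2)[OF that] h wpos[of u] by (simp add: \<phi>_def g_def)
  moreover have "(g has_vector_derivative G h u) (at u within {0..s})" if "u \<in> {0..s}" for u
    unfolding g_def using has_vector_derivative_add[OF has_vector_derivative_const dI[OF that]] by simp
  ultimately have "\<forall>u\<in>{0..s}. (g has_vector_derivative F u (g u)) (at u within {0..s})"
    by (simp add: G_def)
  moreover have "g 0 = z0" by (simp add: g_def I_def)
  ultimately show ?thesis by blast
qed

section \<open>The trapping region\<close>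

definition trapped :: "real \<Rightarrow> real \<Rightarrow> real \<Rightarrow> complex \<Rightarrow> bool" where
  "trapped M \<epsilon> r z \<longleftrightarrow> \<epsilon> \<le> Im z \<and> min r (1 / M^2) \<le> (Im z)^2 \<and> (Im z)^2 \<le> \<epsilon>^2 + 4 * r \<and> \<bar>Re z\<bar> \<le> M * r"

lemma le_mult_if_le_squares:
  fixes y1 y2 a :: real
  assumes "0 \<le> y1" "0 \<le> y2" "a \<le> y1^2" "a \<le> y2^2" "0 \<le> a"
  shows "a \<le> y1 * y2"
proof -
  have "sqrt a \<le> y1" "sqrt a \<le> y2" using assms real_le_lsqrt by auto
  then have "sqrt a * sqrt a \<le> y1 * y2" using assms by (intro mult_mono) auto
  then show ?thesis using assms by simp
qed

lemma trapped_Im_mult_ge: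
  fixes M T \<epsilon> r :: real
  assumes M: "1 \<le> M" and \<epsilon>: "0 < \<epsilon>" "\<epsilon> \<le> 1" and r: "0 \<le> r" "r \<le> T"
    and z1: "trapped M \<epsilon> r z1" and z2: "trapped M \<epsilon> r z2"
  shows "(r + \<epsilon>^2/4) / (2 + M^2 * (T + 1)) \<le> Im z1 * Im z2"
proof -
  define y1 where "y1 = Im z1"
  define y2 where "y2 = Im z2"
  have y: "\<epsilon> \<le> y1" "\<epsilon> \<le> y2" "min r (1/M^2) \<le> y1^2" "min r (1/M^2) \<le> y2^2"
    using z1 z2 by (auto simp: trapped_def y1_def y2_def)
  have C: "2 \<le> 2 + M^2 * (T + 1)" using r by simp
  have Cpos: "0 < 2 + M^2 * (T + 1)" using r by (simp add: add_pos_nonneg)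
  have ee: "\<epsilon>^2 \<le> y1 * y2" using y \<epsilon> by (simp add: power2_eq_square mult_mono)
  show ?thesis
  proof (cases "r \<le> 1 / M^2")
    case True
    then have "r \<le> y1 * y2" using y r \<epsilon> by (intro le_mult_if_le_squares) auto
    then have "(r + \<epsilon>^2/4) \<le> 2 * (y1 * y2)" using ee \<epsilon> zero_le_power2[of \<epsilon>] by linarith
    then have "(r + \<epsilon>^2/4) / (2 + M^2 * (T + 1)) \<le> 2 * (y1 * y2) / (2 + M^2 * (T + 1))"
      using Cpos by (simp add: divide_right_mono)
    also have "\<dots> \<le> 2 * (y1 * y2) / 2"
      using C y \<epsilon> by (intro divide_left_mono) (auto intro!: mult_nonneg_nonneg)
    finally show ?thesis by (simp add: y1_def y2_def)
  next
    case False
    have Mp: "0 < M^2" using M by simp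
    have "1 / M^2 \<le> y1 * y2" using y False Mp \<epsilon> by (intro le_mult_if_le_squares) auto
    moreover have "(r + \<epsilon>^2/4) / (2 + M^2 * (T + 1)) \<le> 1 / M^2"
    proof -
      have "r + \<epsilon>^2/4 \<le> T + 1" using r \<epsilon> power_le_one[of \<epsilon> 2] by simp
      also have "\<dots> \<le> (2 + M^2 * (T + 1)) / M^2" using Mp r by (simp add: field_simps)
      finally show ?thesis using Mp Cpos by (simp add: field_simps)
    qed
    ultimately show ?thesis by (simp add: y1_def y2_def)
  qed
qed

lemma trapped_inverse_norm_mult_le:
  fixes M T \<epsilon> r :: real
  assumes M: "1 \<le> M" and \<epsilon>: "0 < \<epsilon>" "\<epsilon> \<le> 1" and r: "0 \<le> r" "r \<le> T"
    and z1: "trapped M \<epsilon> r z1" and z2: "trapped M \<epsilon> r z2"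
  shows "1 / (cmod z1 * cmod z2) \<le> (2 + M^2 * (T + 1)) / (r + \<epsilon>^2/4)"
proof -
  have p: "(r + \<epsilon>^2/4) / (2 + M^2 * (T + 1)) \<le> Im z1 * Im z2" by (rule trapped_Im_mult_ge[OF assms])
  have Cpos: "0 < 2 + M^2 * (T + 1)" using r by (simp add: add_pos_nonneg)
  have rc: "0 < r + \<epsilon>^2/4" using r \<epsilon> by (simp add: add_nonneg_pos)
  have pos: "0 < (r + \<epsilon>^2/4) / (2 + M^2 * (T + 1))" using Cpos rc by simp
  have "Im z1 * Im z2 \<le> cmod z1 * cmod z2"
    using z1 z2 \<epsilon> abs_Im_le_cmod[of z1] abs_Im_le_cmod[of z2] by (intro mult_mono) (auto simp: trapped_def)
  with p have q: "(r + \<epsilon>^2/4) / (2 + M^2 * (T + 1)) \<le> cmod z1 * cmod z2" by linarith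
  have cp: "0 < cmod z1 * cmod z2" using q pos by linarith
  have "1 / (cmod z1 * cmod z2) \<le> 1 / ((r + \<epsilon>^2/4) / (2 + M^2 * (T + 1)))"
    by (rule divide_left_mono[OF q]) (use mult_pos_pos[OF cp pos] in auto)
  then show ?thesis by simp
qed

text \<open>In the cone \<open>|Re z| \<le> Im z / 2\<close> the product of two points lies in the left half plane, which is
  where \<open>2 / (z1 z2)\<close> gets its negative real part.\<close>
lemma Re_two_div_mult_le_in_cone:
  fixes z1 z2 :: complex
  assumes y: "0 < Im z1" "0 < Im z2" and x: "\<bar>Re z1\<bar> \<le> Im z1 / 2" "\<bar>Re z2\<bar> \<le> Im z2 / 2"
  shows "Re (2 / (z1 * z2)) \<le> - (24/25) / (Im z1 * Im z2)"
proof -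
  define Y where "Y = Im z1 * Im z2"
  have Ypos: "0 < Y" using y by (simp add: Y_def)
  have "Re z1 * Re z2 \<le> \<bar>Re z1\<bar> * \<bar>Re z2\<bar>" by (simp flip: abs_mult)
  also have "\<dots> \<le> (Im z1 / 2) * (Im z2 / 2)" using x by (intro mult_mono) auto
  finally have "Re z1 * Re z2 \<le> (Im z1 / 2) * (Im z2 / 2)" .
  then have P: "Re (z1 * z2) \<le> - (3/4) * Y" by (simp add: Y_def)
  have "(Re z1)^2 \<le> (Im z1 / 2)^2" "(Re z2)^2 \<le> (Im z2 / 2)^2"
    using x by (metis abs_ge_zero power2_abs power_mono)+
  then have "(Re z1)^2 + (Im z1)^2 \<le> (5/4) * (Im z1)^2" "(Re z2)^2 + (Im z2)^2 \<le> (5/4) * (Im z2)^2"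
    by (simp_all add: power_divide)
  then have "(cmod (z1 * z2))^2 \<le> ((5/4) * (Im z1)^2) * ((5/4) * (Im z2)^2)"
    unfolding norm_mult power_mult_distrib cmod_power2 by (intro mult_mono) auto
  then have Q: "(cmod (z1 * z2))^2 \<le> (25/16) * Y^2" by (simp add: Y_def power_mult_distrib)
  have Qpos: "0 < (cmod (z1 * z2))^2" using y by auto
  have "Re (2 / (z1 * z2)) = 2 * Re (z1 * z2) / (cmod (z1 * z2))^2"
    by (simp add: Re_divide cmod_power2)
  also have "\<dots> \<le> 2 * (- (3/4) * Y) / (cmod (z1 * z2))^2"
    using P Qpos by (intro divide_right_mono) auto
  also have "\<dots> \<le> 2 * (- (3/4) * Y) / ((25/16) * Y^2)"
    using Q Qpos Ypos by (intro divide_left_mono_neg) auto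
  also have "\<dots> = - (24/25) / Y" using Ypos by (simp add: field_simps power2_eq_square)
  finally show ?thesis by (simp add: Y_def)
qed

lemma trapped_Re_two_div_le_early:
  fixes M \<epsilon> r :: real
  assumes M: "1 \<le> M" and \<epsilon>: "0 < \<epsilon>" and r: "0 \<le> r" "r \<le> 1 / (4 * M^2)"
    and z1: "trapped M \<epsilon> r z1" and z2: "trapped M \<epsilon> r z2"
  shows "Re (2 / (z1 * z2)) \<le> - (6/25) / (r + \<epsilon>^2/4)"
proof -
  have Mp: "0 < M^2" using M by simp
  have M4: "M^2 * r \<le> 1/4" using r Mp by (simp add: field_simps)
  have "r \<le> 1 / M^2" using M4 Mp by (simp add: field_simps)
  have cone: "\<bar>Re z\<bar> \<le> Im z / 2" if z: "trapped M \<epsilon> r z" for z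
  proof -
    have ry: "r \<le> (Im z)^2" using z \<open>r \<le> 1 / M^2\<close> by (auto simp: trapped_def)
    have "(M * r)^2 = (M^2 * r) * r" by (simp add: power2_eq_square)
    also have "\<dots> \<le> (1/4) * r" using M4 r by (intro mult_right_mono) auto
    also have "\<dots> \<le> (Im z / 2)^2" using ry by (simp add: power_divide)
    finally have "(M * r)^2 \<le> (Im z / 2)^2" .
    moreover have "0 \<le> Im z / 2" using z \<epsilon> by (simp add: trapped_def)
    ultimately have "M * r \<le> Im z / 2" by (rule power2_le_imp_le)
    then show ?thesis using z by (simp add: trapped_def)
  qed
  have Im: "0 < Im z" "Im z \<le> sqrt (\<epsilon>^2 + 4 * r)" if "trapped M \<epsilon> r z" for z
    using that \<epsilon> real_le_rsqrt by (auto simp: trapped_def)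
  have "Im z1 * Im z2 \<le> sqrt (\<epsilon>^2 + 4 * r) * sqrt (\<epsilon>^2 + 4 * r)"
    using Im[OF z1] Im[OF z2] r by (intro mult_mono) auto
  also have "\<dots> = 4 * (r + \<epsilon>^2/4)" using r by simp
  finally have Y: "Im z1 * Im z2 \<le> 4 * (r + \<epsilon>^2/4)" .
  have "Re (2 / (z1 * z2)) \<le> - (24/25) / (Im z1 * Im z2)"
    using cone[OF z1] cone[OF z2] Im(1)[OF z1] Im(1)[OF z2] by (rule_tac Re_two_div_mult_le_in_cone) auto
  also have "\<dots> \<le> - (24/25) / (4 * (r + \<epsilon>^2/4))"
  proof (rule divide_left_mono_neg[OF Y])
    show "0 < Im z1 * Im z2 * (4 * (r + \<epsilon>^2/4))"
      using Im(1)[OF z1] Im(1)[OF z2] r \<epsilon> by (auto intro!: mult_pos_pos add_nonneg_pos)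
  qed simp
  also have "\<dots> = - (6/25) / (r + \<epsilon>^2/4)" by (simp add: divide_simps)
  finally show ?thesis .
qed
lemma trapped_Re_two_div_le_late:
  fixes M \<epsilon> r :: real
  assumes M: "1 \<le> M" and \<epsilon>: "0 < \<epsilon>" and r: "1 / (4 * M^2) \<le> r"
    and z1: "trapped M \<epsilon> r z1" and z2: "trapped M \<epsilon> r z2"
  shows "Re (2 / (z1 * z2)) \<le> 8 * M^2"
proof -
  have Mp: "0 < M^2" using M by simp
  have "1 / (4 * M^2) \<le> min r (1 / M^2)" using r Mp by (simp add: field_simps)
  then have Yl: "1 / (4 * M^2) \<le> Im z1 * Im z2"
    using z1 z2 \<epsilon> Mp by (intro le_mult_if_le_squares) (auto simp: trapped_def)
  have "Re (2 / (z1 * z2)) \<le> 2 / (cmod z1 * cmod z2)"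
    using complex_Re_le_cmod[of "2 / (z1 * z2)"] by (simp add: norm_divide norm_mult)
  also have "\<dots> \<le> 2 / (Im z1 * Im z2)"
    using abs_Im_le_cmod[of z1] abs_Im_le_cmod[of z2] z1 z2 \<epsilon>
    by (auto simp: trapped_def intro!: divide_left_mono mult_mono mult_pos_pos)
  also have "\<dots> \<le> 2 / (1 / (4 * M^2))"
  proof (rule divide_left_mono[OF Yl])
    show "0 < Im z1 * Im z2 * (1 / (4 * M^2))"
      using Yl Mp by (smt (verit) divide_pos_pos mult_pos_pos)
  qed simp
  finally show ?thesis by simp
qed

lemma trapped_Re_two_div_le:
  fixes M \<epsilon> r :: real
  assumes M: "1 \<le> M" and \<epsilon>: "0 < \<epsilon>" and r: "0 \<le> r"
    and z1: "trapped M \<epsilon> r z1" and z2: "trapped M \<epsilon> r z2"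
  shows "Re (2 / (z1 * z2)) \<le> 16 * M^2 - (6/25) / (r + \<epsilon>^2/4)"
proof (cases "r \<le> 1 / (4 * M^2)")
  case True
  then show ?thesis using trapped_Re_two_div_le_early[OF M \<epsilon> r True z1 z2] zero_le_power2[of M] by linarith
next
  case False
  have Mp: "0 < M^2" using M by simp
  have "1 / (4 * M^2) \<le> r + \<epsilon>^2/4" using False zero_le_power2[of \<epsilon>] by linarith
  then have "(6/25) / (r + \<epsilon>^2/4) \<le> (6/25) / (1 / (4 * M^2))"
    using Mp by (smt (verit) divide_left_mono divide_pos_pos mult_pos_pos)
  also have "\<dots> = 8 * M^2 * (3/25)" by simp
  finally have "(6/25) / (r + \<epsilon>^2/4) \<le> 8 * M^2" using Mp by linarith
  moreover have "Re (2 / (z1 * z2)) \<le> 8 * M^2"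
    using False by (intro trapped_Re_two_div_le_late[OF M \<epsilon> _ z1 z2]) simp
  ultimately show ?thesis by linarith
qed


lemma Im_minus_two_div_add_real: "Im (-2 / z + complex_of_real t) = 2 * Im z / (cmod z)^2"
  by (simp add: Im_divide cmod_power2)

locale loewner_driver =
  fixes T M \<alpha> :: real and lam dlam :: "real \<Rightarrow> real" and \<epsilon> :: real
  assumes T_pos: "0 < T" and M_ge_1: "1 \<le> M" and \<alpha>: "0 < \<alpha>" "\<alpha> \<le> 1"
  and lam_deriv: "\<And>t. t \<in> {0..T} \<Longrightarrow> (lam has_real_derivative dlam t) (at t within {0..T})"
  and dlam_cont: "continuous_on {0..T} dlam"
  and dlam_bounded: "\<And>t. t \<in> {0..T} \<Longrightarrow> \<bar>dlam t\<bar> \<le> M"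
  and dlam_holder: "\<And>t s. t \<in> {0..T} \<Longrightarrow> s \<in> {0..T} \<Longrightarrow> \<bar>dlam t - dlam s\<bar> \<le> M * \<bar>t - s\<bar> powr \<alpha>"
  and \<epsilon>: "0 < \<epsilon>" "\<epsilon> \<le> 1"
begin

lemma dlam_reflect_cont:
  assumes "0 \<le> s" "s \<le> T"
  shows "continuous_on {0..s} (\<lambda>r. dlam (s - r))"
  by (rule continuous_on_compose2[OF dlam_cont]) (use assms in \<open>auto intro!: continuous_intros\<close>)

context
  fixes s g
  assumes s: "0 \<le> s" "s \<le> T" and sol: "is_sol dlam s \<epsilon> g"
begin

lemma sol_0: "g 0 = \<i> * complex_of_real \<epsilon>"
  using sol by (simp add: is_sol_def)

lemma sol_deriv:
  "r \<in> {0..s} \<Longrightarrow> (g has_vector_derivative (-2 / g r + complex_of_real (dlam (s - r)))) (at r within {0..s})"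
  using sol by (simp add: is_sol_def)

lemma sol_cont: "continuous_on {0..s} g"
  using sol_deriv by (rule continuous_on_vector_derivative)

lemma sol_Im_deriv:
  assumes "r \<in> {0..s}"
  shows "((\<lambda>r. Im (g r)) has_real_derivative 2 * Im (g r) / (cmod (g r))^2) (at r within {0..s})"
  using has_real_derivative_Im_comp[OF sol_deriv[OF assms]] unfolding Im_minus_two_div_add_real .

lemma sol_Im_sq_deriv:
  assumes "r \<in> {0..s}"
  shows "((\<lambda>r. Im (g r)^2) has_real_derivative 4 * Im (g r)^2 / (cmod (g r))^2) (at r within {0..s})"
  using DERIV_power[OF sol_Im_deriv[OF assms], of 2] by (simp add: power2_eq_square)

lemma sol_Im_ge_eps: assumes "r \<in> {0..s}" shows "\<epsilon> \<le> Im (g r)"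
proof -
  have "Im (g 0) \<le> Im (g r)"
    by (rule ge_initial_if_DERIV_nonneg_where_pos[OF sol_Im_deriv _ _ assms]) (auto simp: sol_0 \<epsilon>)
  then show ?thesis by (simp add: sol_0)
qed

lemma sol_nonzero: "r \<in> {0..s} \<Longrightarrow> g r \<noteq> 0"
  using sol_Im_ge_eps[of r] \<epsilon> by auto

lemma sol_Im_mono:
  assumes "r \<in> {0..s}" "r' \<in> {0..s}" "r \<le> r'"
  shows "Im (g r) \<le> Im (g r')"
proof (rule increasing_if_DERIV_within_nonneg[where \<psi> = "\<lambda>x. Im (g x)"])
  fix x assume "x \<in> {r..r'}"
  then have x: "x \<in> {0..s}" using assms by auto
  show "((\<lambda>x. Im (g x)) has_real_derivative 2 * Im (g x) / (cmod (g x))^2) (at x within {r..r'})"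
    by (rule DERIV_subset[OF sol_Im_deriv[OF x]]) (use assms in auto)
  show "0 \<le> 2 * Im (g x) / (cmod (g x))^2" using sol_Im_ge_eps[OF x] \<epsilon> by simp
qed fact

lemma sol_abs_Re_le: assumes r: "r \<in> {0..s}" shows "\<bar>Re (g r)\<bar> \<le> M * r"
proof -
  define D where "D = (\<lambda>t. complex_of_real (Re (g t)))"
  define a where "a t = complex_of_real (-2 / (cmod (g t))^2)" for t
  have sub: "{0..r} \<subseteq> {0..s}" using r by auto
  have "cmod (D r) \<le> exp (0 - 0) * cmod (D 0) + (M * r - M * 0)"
  proof (rule linear_ode_norm_bound[where \<rho> = "\<lambda>_. 0" and \<rho>' = "\<lambda>_. 0" and H = "\<lambda>t. M * t" and h = "\<lambda>_. M"
      and b = "\<lambda>t. complex_of_real (dlam (s - t))"])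
    fix t assume t: "t \<in> {0..r}"
    then have t': "t \<in> {0..s}" using sub by auto
    have "((\<lambda>t. Re (g t)) has_real_derivative Re (-2 / g t + complex_of_real (dlam (s - t)))) (at t within {0..r})"
      by (rule DERIV_subset[OF has_real_derivative_Re_comp[OF sol_deriv[OF t']] sub])
    moreover have "Re (-2 / g t + complex_of_real (dlam (s - t))) = -2 / (cmod (g t))^2 * Re (g t) + dlam (s - t)"
      by (simp add: Re_divide cmod_power2)
    ultimately have "((\<lambda>t. Re (g t)) has_real_derivative -2 / (cmod (g t))^2 * Re (g t) + dlam (s - t)) (at t within {0..r})"
      by simp
    from has_vector_derivative_of_real[OF this]
    show "(D has_vector_derivative a t * D t + complex_of_real (dlam (s - t))) (at t within {0..r})"
      by (simp only: D_def a_def of_real_add of_real_mult)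
    show "((\<lambda>t. M * t) has_real_derivative M) (at t within {0..r})"
      using DERIV_cmult[OF DERIV_ident, of M] by simp
    have "s - t \<in> {0..T}" using t' s by auto
    then show "exp (0 - 0) * cmod (complex_of_real (dlam (s - t))) \<le> M" using dlam_bounded by simp
  next
    show "continuous_on {0..r} a" unfolding a_def
      using continuous_on_subset[OF sol_cont sub] sol_nonzero sub by (intro continuous_intros) auto
  qed (use r in \<open>auto simp: a_def\<close>)
  then show ?thesis by (simp add: D_def sol_0)
qed

lemma sol_Im_sq_le: assumes r: "r \<in> {0..s}" shows "Im (g r)^2 \<le> \<epsilon>^2 + 4 * r"
proof -
  have "(\<lambda>t. Im (g t)^2 - 4 * t) r \<le> (\<lambda>t. Im (g t)^2 - 4 * t) 0"
  proof (rule decreasing_if_DERIV_within_nonpos[where \<psi> = "\<lambda>t. Im (g t)^2 - 4 * t" and \<psi>' = "\<lambda>t. 4 * Im (g t)^2 / (cmod (g t))^2 - 4"])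
    fix t assume t: "t \<in> {0..r}"
    then have t': "t \<in> {0..s}" using r by auto
    show "((\<lambda>t. Im (g t)^2 - 4 * t) has_real_derivative 4 * Im (g t)^2 / (cmod (g t))^2 - 4) (at t within {0..r})"
      using DERIV_diff[OF DERIV_subset[OF sol_Im_sq_deriv[OF t']] DERIV_cmult[OF DERIV_ident, of 4]] r by simp
    have "Im (g t)^2 \<le> (cmod (g t))^2" by (simp add: cmod_power2)
    then show "4 * Im (g t)^2 / (cmod (g t))^2 - 4 \<le> 0"
      using sol_nonzero[OF t'] by (simp add: divide_le_eq)
  qed (use r in auto)
  then show ?thesis by (simp add: sol_0)
qed

text \<open>Up to time \<open>1 / M^2\<close> the real part satisfies \<open>(Re g)^2 \<le> t\<close>, so \<open>Im g^2 - t\<close>, whose derivative is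
  \<open>(3 Im g^2 - Re g^2) / |g|^2\<close>, cannot decrease while it is positive.\<close>
lemma sol_Im_sq_ge_early:
  assumes r: "r \<in> {0..s}" "r \<le> 1 / M^2"
  shows "r \<le> Im (g r)^2"
proof -
  have "(\<lambda>t. Im (g t)^2 - t) 0 \<le> (\<lambda>t. Im (g t)^2 - t) r"
  proof (rule ge_initial_if_DERIV_nonneg_where_pos[where \<phi> = "\<lambda>t. Im (g t)^2 - t" and \<phi>' = "\<lambda>t. 4 * Im (g t)^2 / (cmod (g t))^2 - 1"])
    fix t assume t: "t \<in> {0..r}"
    then have t': "t \<in> {0..s}" using r by auto
    show "((\<lambda>t. Im (g t)^2 - t) has_real_derivative 4 * Im (g t)^2 / (cmod (g t))^2 - 1) (at t within {0..r})"
      using DERIV_diff[OF DERIV_subset[OF sol_Im_sq_deriv[OF t']] DERIV_ident] r by simp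
    assume pos: "0 < Im (g t)^2 - t"
    have "\<bar>Re (g t)\<bar> \<le> M * t" by (rule sol_abs_Re_le[OF t'])
    then have "(Re (g t))^2 \<le> (M * t)^2" by (metis abs_ge_zero power2_abs power_mono)
    also have "\<dots> = (M^2 * t) * t" by (simp add: power2_eq_square)
    also have "\<dots> \<le> 1 * t"
    proof (rule mult_right_mono)
      have "M^2 * t \<le> M^2 * (1 / M^2)" using t r by (intro mult_left_mono) auto
      then show "M^2 * t \<le> 1" using M_ge_1 by simp
    qed (use t in auto)
    finally have "(Re (g t))^2 \<le> t" by simp
    then have "(cmod (g t))^2 \<le> 4 * Im (g t)^2"
      using pos zero_le_power2[of "Re (g t)"] unfolding cmod_power2 by linarith
    then show "0 \<le> 4 * Im (g t)^2 / (cmod (g t))^2 - 1"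
      using sol_nonzero[OF t'] by (simp add: le_divide_eq)
  qed (use r \<epsilon> in \<open>auto simp: sol_0\<close>)
  then show ?thesis using zero_le_power2[of "Im (g 0)"] by linarith
qed

lemma sol_Im_sq_ge: assumes r: "r \<in> {0..s}" shows "min r (1 / M^2) \<le> Im (g r)^2"
proof (cases "r \<le> 1 / M^2")
  case False
  then have r1: "1 / M^2 \<in> {0..s}" "1 / M^2 \<le> r" using r by auto
  have "1 / M^2 \<le> Im (g (1 / M^2))^2" by (rule sol_Im_sq_ge_early[OF r1(1)]) simp
  also have "\<dots> \<le> Im (g r)^2"
    using sol_Im_mono[OF r1(1) r r1(2)] sol_Im_ge_eps[OF r1(1)] \<epsilon> by (intro power_mono) auto
  finally show ?thesis by simp
qed (use sol_Im_sq_ge_early[OF r] in simp)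

end

lemma sol_unique:
  assumes s: "0 \<le> s" "s \<le> T" and g1: "is_sol dlam s \<epsilon> g1" and g2: "is_sol dlam s \<epsilon> g2"
    and r: "r \<in> {0..s}"
  shows "g1 r = g2 r"
proof -
  define D where "D t = g1 t - g2 t" for t
  define a where "a t = 2 / (g1 t * g2 t)" for t
  have sub: "{0..r} \<subseteq> {0..s}" using r by auto
  have "cmod (D r) \<le> exp (2 / \<epsilon>^2 * r - 2 / \<epsilon>^2 * 0) * cmod (D 0) + (0 - 0)"
  proof (rule linear_ode_norm_bound[where b = "\<lambda>_. 0" and \<rho> = "\<lambda>t. 2 / \<epsilon>^2 * t" and \<rho>' = "\<lambda>_. 2 / \<epsilon>^2"
      and H = "\<lambda>_. 0" and h = "\<lambda>_. 0"])
    fix t assume t: "t \<in> {0..r}"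
    then have t': "t \<in> {0..s}" using sub by auto
    have nz: "g1 t \<noteq> 0" "g2 t \<noteq> 0" using sol_nonzero[OF s g1 t'] sol_nonzero[OF s g2 t'] by auto
    have "(D has_vector_derivative (-2 / g1 t + complex_of_real (dlam (s - t))) - (-2 / g2 t + complex_of_real (dlam (s - t)))) (at t within {0..r})"
      unfolding D_def
      by (rule has_vector_derivative_within_subset[OF has_vector_derivative_diff[OF sol_deriv[OF s g1 t'] sol_deriv[OF s g2 t']] sub])
    then show "(D has_vector_derivative a t * D t + 0) (at t within {0..r})"
      using nz by (simp add: a_def D_def field_simps)
    show "((\<lambda>t. 2 / \<epsilon>^2 * t) has_real_derivative 2 / \<epsilon>^2) (at t within {0..r})"
      using DERIV_cmult[OF DERIV_ident, of "2 / \<epsilon>^2"] by simp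
    have "\<epsilon> \<le> cmod (g1 t)" "\<epsilon> \<le> cmod (g2 t)"
      using sol_Im_ge_eps[OF s g1 t'] sol_Im_ge_eps[OF s g2 t'] abs_Im_le_cmod[of "g1 t"] abs_Im_le_cmod[of "g2 t"]
      by linarith+
    then have "2 / (cmod (g1 t) * cmod (g2 t)) \<le> 2 / (\<epsilon> * \<epsilon>)"
      using \<epsilon> by (intro divide_left_mono mult_mono mult_pos_pos) auto
    then show "Re (a t) \<le> 2 / \<epsilon>^2"
      using complex_Re_le_cmod[of "a t"] by (simp add: a_def norm_divide norm_mult power2_eq_square)
  next
    show "continuous_on {0..r} a" unfolding a_def
      using continuous_on_subset[OF sol_cont[OF s g1] sub] continuous_on_subset[OF sol_cont[OF s g2] sub]
        sol_nonzero[OF s g1] sol_nonzero[OF s g2] sub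
      by (intro continuous_intros) auto
  qed (use r in auto)
  then show ?thesis by (simp add: D_def sol_0[OF s g1] sol_0[OF s g2])
qed

lemma sol_exists:
  assumes s: "0 \<le> s" "s \<le> T"
  shows "\<exists>g. is_sol dlam s \<epsilon> g"
proof -
  define F where "F v z = -2 / lift_Im \<epsilon> z + complex_of_real (dlam (s - v))" for v z
  have F_cont: "continuous_on {0..s} (\<lambda>v. F v (h v))" if "continuous_on {0..s} h" for h
    unfolding F_def using that dlam_reflect_cont[OF s] lift_Im_nonzero[OF \<epsilon>(1)]
    by (intro continuous_intros continuous_on_compose2[OF continuous_on_lift_Im]) force+
  have F_lip: "cmod (F v z1 - F v z2) \<le> 2 / \<epsilon>^2 * cmod (z1 - z2)" for v z1 z2
    using norm_two_div_lift_Im_diff_le[OF \<epsilon>(1), of z2 z1]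
    by (simp add: F_def norm_minus_commute)
  from lipschitz_ode_exists[OF s(1) _ F_cont F_lip, of "\<i> * complex_of_real \<epsilon>"] \<epsilon>
  obtain g where g0: "g 0 = \<i> * complex_of_real \<epsilon>"
    and dg: "\<And>u. u \<in> {0..s} \<Longrightarrow> (g has_vector_derivative F u (g u)) (at u within {0..s})"
    by auto
  have "\<epsilon> \<le> Im (g u)" if u: "u \<in> {0..s}" for u
  proof -
    have "Im (g 0) \<le> Im (g u)"
    proof (rule increasing_if_DERIV_within_nonneg[where \<psi> = "\<lambda>t. Im (g t)"])
      fix t assume "t \<in> {0..u}"
      then have t: "t \<in> {0..s}" using u by auto
      show "((\<lambda>t. Im (g t)) has_real_derivative Im (F t (g t))) (at t within {0..u})"
        by (rule DERIV_subset[OF has_real_derivative_Im_comp[OF dg[OF t]]]) (use u in auto)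
      show "0 \<le> Im (F t (g t))"
        unfolding F_def Im_minus_two_div_add_real using \<epsilon> by simp
    qed (use u in auto)
    then show ?thesis by (simp add: g0)
  qed
  then have "is_sol dlam s \<epsilon> g"
    using dg g0 by (simp add: is_sol_def F_def lift_Im_eq_self)
  then show ?thesis by blast
qed

lemma fsol_eq_sol:
  assumes s: "0 \<le> s" "s \<le> T" and g: "is_sol dlam s \<epsilon> g" and u: "u \<in> {0..s}"
  shows "fsol dlam u s \<epsilon> = g u"
  unfolding fsol_def
  by (rule the_equality) (use g sol_unique[OF s _ g u] in blast)+

end

context loewner_driver
begin

definition flow :: "real \<Rightarrow> real \<Rightarrow> complex" where
  "flow s = (SOME g. is_sol dlam s \<epsilon> g)"

lemma flow_is_sol: "0 \<le> s \<Longrightarrow> s \<le> T \<Longrightarrow> is_sol dlam s \<epsilon> (flow s)"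
  unfolding flow_def using sol_exists by (rule someI_ex)

lemma fsol_eq_flow: "0 \<le> u \<Longrightarrow> u \<le> s \<Longrightarrow> s \<le> T \<Longrightarrow> fsol dlam u s \<epsilon> = flow s u"
  using fsol_eq_sol[OF _ _ flow_is_sol] by simp

lemma flow_cont: "0 \<le> s \<Longrightarrow> s \<le> T \<Longrightarrow> continuous_on {0..s} (flow s)"
  using sol_cont[OF _ _ flow_is_sol] by blast

lemma flow_nonzero: "0 \<le> s \<Longrightarrow> s \<le> T \<Longrightarrow> r \<in> {0..s} \<Longrightarrow> flow s r \<noteq> 0"
  using sol_nonzero[OF _ _ flow_is_sol] by blast

lemma norm_flow_ge_eps: "0 \<le> s \<Longrightarrow> s \<le> T \<Longrightarrow> r \<in> {0..s} \<Longrightarrow> \<epsilon> \<le> cmod (flow s r)"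
  using sol_Im_ge_eps[OF _ _ flow_is_sol] abs_Im_le_cmod[of "flow s r"] by force

lemma flow_trapped: "0 \<le> s \<Longrightarrow> s \<le> T \<Longrightarrow> r \<in> {0..s} \<Longrightarrow> trapped M \<epsilon> r (flow s r)"
  unfolding trapped_def
  using sol_Im_ge_eps[OF _ _ flow_is_sol] sol_Im_sq_ge[OF _ _ flow_is_sol] sol_Im_sq_le[OF _ _ flow_is_sol]
    sol_abs_Re_le[OF _ _ flow_is_sol]
  by auto

lemma DERIV_lam_reflect:
  assumes s: "0 \<le> s" "s \<le> T" and r: "r \<in> {0..s}"
  shows "((\<lambda>r. lam (s - r)) has_real_derivative - dlam (s - r)) (at r within {0..s})"
proof -
  have "(lam has_real_derivative dlam (s - r)) (at (s - r) within (\<lambda>r. s - r) ` {0..s})"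
    by (rule DERIV_subset[OF lam_deriv]) (use r s in auto)
  from DERIV_image_chain[OF this DERIV_diff[OF DERIV_const DERIV_ident]]
  show ?thesis by (simp add: o_def)
qed

lemma DERIV_lam_shift:
  assumes a: "0 \<le> a" "a + d \<le> T" and t: "t \<in> {0..d}"
  shows "((\<lambda>t. lam (a + t)) has_real_derivative dlam (a + t)) (at t within {0..d})"
proof -
  have "(lam has_real_derivative dlam (a + t)) (at (a + t) within (\<lambda>t. a + t) ` {0..d})"
    by (rule DERIV_subset[OF lam_deriv]) (use a t in auto)
  from DERIV_image_chain[OF this DERIV_add[OF DERIV_const DERIV_ident]]
  show ?thesis by (simp add: o_def)
qed

definition lam_incr :: "real \<Rightarrow> real \<Rightarrow> real" where
  "lam_incr s r = lam s - lam (s - r)"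

text \<open>Subtracting the driving increment removes the rough term \<open>\<lambda>'(s - r)\<close> from the equation, leaving
  \<open>\<partial>\<^sub>r (flow s r - \<lambda>(s) + \<lambda>(s - r)) = -2 / flow s r\<close>.\<close>
definition flow_reduced :: "real \<Rightarrow> real \<Rightarrow> complex" where
  "flow_reduced s r = flow s r - complex_of_real (lam_incr s r)"

lemma flow_reduced_deriv:
  assumes s: "0 \<le> s" "s \<le> T" and r: "r \<in> {0..s}"
  shows "(flow_reduced s has_vector_derivative -2 / flow s r) (at r within {0..s})"
proof -
  have "(flow_reduced s has_vector_derivative
      (-2 / flow s r + complex_of_real (dlam (s - r))) - (0 - complex_of_real (- dlam (s - r))))
      (at r within {0..s})"
    unfolding flow_reduced_def[abs_def] lam_incr_def of_real_diff
    by (intro has_vector_derivative_diff sol_deriv[OF s flow_is_sol[OF s] r]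
        has_vector_derivative_const has_vector_derivative_of_real DERIV_lam_reflect[OF s r])
  then show ?thesis by simp
qed

lemma flow_reduced_0: "0 \<le> s \<Longrightarrow> s \<le> T \<Longrightarrow> flow_reduced s 0 = \<i> * complex_of_real \<epsilon>"
  by (simp add: flow_reduced_def lam_incr_def sol_0[OF _ _ flow_is_sol])

lemma lam_incr_diff_le_time:
  assumes "0 \<le> r" "r \<le> s" "0 \<le> \<delta>" "s + \<delta> \<le> T"
  shows "\<bar>lam_incr (s + \<delta>) r - lam_incr s r\<bar> \<le> M * \<delta> powr \<alpha> * r"
proof -
  have "\<bar>(lam (s + \<delta> - r) - lam (s - r)) - (lam (s + \<delta> - 0) - lam (s - 0))\<bar> \<le> M * \<delta> powr \<alpha> * r - M * \<delta> powr \<alpha> * 0"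
  proof (rule abs_diff_le_if_DERIV_le[where f = "\<lambda>t. lam (s + \<delta> - t) - lam (s - t)"
      and f' = "\<lambda>t. - dlam (s + \<delta> - t) - - dlam (s - t)" and \<phi> = "\<lambda>t. M * \<delta> powr \<alpha> * t"])
    fix t assume t: "t \<in> {0..r}"
    show "((\<lambda>t. lam (s + \<delta> - t) - lam (s - t)) has_real_derivative - dlam (s + \<delta> - t) - - dlam (s - t))
        (at t within {0..r})"
    proof (rule DERIV_diff)
      show "((\<lambda>t. lam (s + \<delta> - t)) has_real_derivative - dlam (s + \<delta> - t)) (at t within {0..r})"
        by (rule DERIV_subset[OF DERIV_lam_reflect[of "s + \<delta>" t]]) (use t assms in auto)
      show "((\<lambda>t. lam (s - t)) has_real_derivative - dlam (s - t)) (at t within {0..r})"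
        by (rule DERIV_subset[OF DERIV_lam_reflect[of s t]]) (use t assms in auto)
    qed
    show "((\<lambda>t. M * \<delta> powr \<alpha> * t) has_real_derivative M * \<delta> powr \<alpha>) (at t within {0..r})"
      using DERIV_cmult[OF DERIV_ident, of "M * \<delta> powr \<alpha>"] by simp
    have "\<bar>dlam (s + \<delta> - t) - dlam (s - t)\<bar> \<le> M * \<bar>(s + \<delta> - t) - (s - t)\<bar> powr \<alpha>"
      by (rule dlam_holder) (use t assms in auto)
    then show "\<bar>- dlam (s + \<delta> - t) - - dlam (s - t)\<bar> \<le> M * \<delta> powr \<alpha>" using assms by simp
  qed (use assms in auto)
  then show ?thesis by (simp add: lam_incr_def algebra_simps)
qed

lemma lam_incr_diff_le_shift:
  assumes "0 \<le> r" "r \<le> s" "0 \<le> \<delta>" "s + \<delta> \<le> T"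
  shows "\<bar>lam_incr (s + \<delta>) r - lam_incr s r\<bar> \<le> M * r powr \<alpha> * \<delta>"
proof -
  have "\<bar>(lam (s + \<delta>) - lam (s - r + \<delta>)) - (lam (s + 0) - lam (s - r + 0))\<bar> \<le> M * r powr \<alpha> * \<delta> - M * r powr \<alpha> * 0"
  proof (rule abs_diff_le_if_DERIV_le[where f = "\<lambda>t. lam (s + t) - lam (s - r + t)"
      and f' = "\<lambda>t. dlam (s + t) - dlam (s - r + t)" and \<phi> = "\<lambda>t. M * r powr \<alpha> * t"])
    fix t assume t: "t \<in> {0..\<delta>}"
    show "((\<lambda>t. lam (s + t) - lam (s - r + t)) has_real_derivative dlam (s + t) - dlam (s - r + t)) (at t within {0..\<delta>})"
      by (rule DERIV_diff[OF DERIV_lam_shift DERIV_lam_shift]) (use t assms in auto)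
    show "((\<lambda>t. M * r powr \<alpha> * t) has_real_derivative M * r powr \<alpha>) (at t within {0..\<delta>})"
      using DERIV_cmult[OF DERIV_ident, of "M * r powr \<alpha>"] by simp
    have "\<bar>dlam (s + t) - dlam (s - r + t)\<bar> \<le> M * \<bar>(s + t) - (s - r + t)\<bar> powr \<alpha>"
      by (rule dlam_holder) (use t assms in auto)
    then show "\<bar>dlam (s + t) - dlam (s - r + t)\<bar> \<le> M * r powr \<alpha>" using assms by simp
  qed (use assms in auto)
  then show ?thesis by (simp add: lam_incr_def algebra_simps)
qed

lemma lam_incr_diff_le_min:
  assumes "0 \<le> r" "r \<le> s" "0 \<le> \<delta>" "s + \<delta> \<le> T"
  shows "\<bar>lam_incr (s + \<delta>) r - lam_incr s r\<bar> \<le> M * min (r * \<delta> powr \<alpha>) (\<delta> * r powr \<alpha>)"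
  using lam_incr_diff_le_time[OF assms] lam_incr_diff_le_shift[OF assms]
  by (simp add: min_def algebra_simps)

definition "c0 = \<epsilon>^2 / 4"
definition "C2 = 2 + M^2 * (T + 1)"

lemma c0: "0 < c0" "c0 \<le> 1" using \<epsilon> power_le_one[of \<epsilon> 2] by (auto simp: c0_def)
lemma C2: "0 < C2" using T_pos by (simp add: C2_def add_pos_nonneg)

definition coef :: "real \<Rightarrow> real \<Rightarrow> real \<Rightarrow> complex" where
  "coef s1 s2 r = 2 / (flow s1 r * flow s2 r)"

lemma
  assumes s1: "0 \<le> s1" "s1 \<le> T" and s2: "0 \<le> s2" "s2 \<le> T" and r: "0 \<le> r" "r \<le> s1" "r \<le> s2"
  shows Re_coef_le: "Re (coef s1 s2 r) \<le> 16 * M^2 - (6/25) / (r + c0)"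
    and norm_coef_le: "cmod (coef s1 s2 r) \<le> 2 * C2 / (r + c0)"
proof -
  have z: "trapped M \<epsilon> r (flow s1 r)" "trapped M \<epsilon> r (flow s2 r)"
    using flow_trapped[OF s1] flow_trapped[OF s2] r by auto
  show "Re (coef s1 s2 r) \<le> 16 * M^2 - (6/25) / (r + c0)"
    using trapped_Re_two_div_le[OF M_ge_1 \<epsilon>(1) r(1) z] by (simp add: coef_def c0_def)
  have "1 / (cmod (flow s1 r) * cmod (flow s2 r)) \<le> C2 / (r + c0)"
    using trapped_inverse_norm_mult_le[OF M_ge_1 \<epsilon> r(1) _ z] r s1 by (simp add: C2_def c0_def)
  then show "cmod (coef s1 s2 r) \<le> 2 * C2 / (r + c0)"
    by (simp add: coef_def norm_divide norm_mult)
qed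

lemma coef_cont:
  assumes "0 \<le> s1" "s1 \<le> T" "0 \<le> s2" "s2 \<le> T" "u \<le> s1" "u \<le> s2"
  shows "continuous_on {0..u} (coef s1 s2)"
  unfolding coef_def[abs_def] using assms flow_nonzero
  by (intro continuous_intros continuous_on_subset[OF flow_cont]) auto

lemma flow_reduced_diff_deriv:
  assumes s1: "0 \<le> s1" "s1 \<le> T" and s2: "0 \<le> s2" "s2 \<le> T" and r: "r \<in> {0..u}" "u \<le> s1" "u \<le> s2"
  shows "((\<lambda>r. flow_reduced s1 r - flow_reduced s2 r) has_vector_derivative
      coef s1 s2 r * (flow s1 r - flow s2 r)) (at r within {0..u})"
proof -
  have "((\<lambda>r. flow_reduced s1 r - flow_reduced s2 r) has_vector_derivative -2 / flow s1 r - -2 / flow s2 r)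
      (at r within {0..u})"
    using r by (intro has_vector_derivative_diff has_vector_derivative_within_subset[OF flow_reduced_deriv])
      (use s1 s2 in auto)
  moreover have "flow s1 r \<noteq> 0" "flow s2 r \<noteq> 0" using flow_nonzero s1 s2 r by auto
  ultimately show ?thesis by (simp add: coef_def field_simps)
qed

definition "Cw = exp (16 * M^2 * T) * 2 * C2 * M / (6/25)"
definition "CA = Cw + M"

lemma Cw: "0 \<le> Cw" using C2 M_ge_1 by (simp add: Cw_def)
lemma CA: "0 \<le> CA" using Cw M_ge_1 by (simp add: CA_def)

text \<open>The difference \<open>D\<close> of the reduced flows at \<open>s + \<delta>\<close> and \<open>s\<close> solves \<open>D' = a (D + E)\<close>, with
  \<open>a = 2 / (f(s+\<delta>) f(s))\<close> and \<open>E\<close> the difference of the driving increments.\<close>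
lemma flow_diff_le:
  assumes u: "0 \<le> u" "u \<le> s" and \<delta>: "0 \<le> \<delta>" "s + \<delta> \<le> T"
  shows "cmod (flow (s + \<delta>) u - flow s u) \<le> CA * min (u * \<delta> powr \<alpha>) (\<delta> * u powr \<alpha>)"
proof -
  have s1: "0 \<le> s + \<delta>" "s + \<delta> \<le> T" and s2: "0 \<le> s" "s \<le> T" using u \<delta> by auto
  define m where "m = min (u * \<delta> powr \<alpha>) (\<delta> * u powr \<alpha>)"
  define E where "E r = lam_incr (s + \<delta>) r - lam_incr s r" for r
  have Eb: "\<bar>E r\<bar> \<le> M * m" if "r \<in> {0..u}" for r
  proof -
    have "\<bar>E r\<bar> \<le> M * min (r * \<delta> powr \<alpha>) (\<delta> * r powr \<alpha>)"
      unfolding E_def by (rule lam_incr_diff_le_min) (use that u \<delta> in auto)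
    also have "\<dots> \<le> M * m" unfolding m_def
      using that \<alpha> \<delta> M_ge_1 by (intro mult_left_mono min.mono mult_right_mono mult_left_mono powr_mono2) auto
    finally show ?thesis .
  qed
  define D where "D r = flow_reduced (s + \<delta>) r - flow_reduced s r" for r
  have fdiff: "flow (s + \<delta>) r - flow s r = D r + complex_of_real (E r)" for r
    by (simp add: D_def flow_reduced_def E_def)
  have "cmod (D u) \<le> exp (16 * M^2 * T) * (cmod (D 0) + (2 * C2 * M * m) / (6/25) + 2 * 0 * sqrt (T + c0) + 0 * T)"
  proof (rule linear_ode_norm_bound_log_weight[OF u(1) _ c0(1), where a = "coef (s + \<delta>) s"
        and b = "\<lambda>r. coef (s + \<delta>) s r * complex_of_real (E r)"])
    fix r assume r: "r \<in> {0..u}"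
    show "(D has_vector_derivative coef (s + \<delta>) s r * D r + coef (s + \<delta>) s r * complex_of_real (E r))
        (at r within {0..u})"
      using flow_reduced_diff_deriv[OF s1 s2 r] u \<delta> unfolding D_def[abs_def] fdiff
      by (simp add: algebra_simps)
    show "Re (coef (s + \<delta>) s r) \<le> 16 * M^2 - (6/25) / (r + c0)"
      by (rule Re_coef_le[OF s1 s2]) (use r u \<delta> in auto)
    have "cmod (coef (s + \<delta>) s r) \<le> 2 * C2 / (r + c0)"
      by (rule norm_coef_le[OF s1 s2]) (use r u \<delta> in auto)
    then have "cmod (coef (s + \<delta>) s r) * \<bar>E r\<bar> \<le> (2 * C2 / (r + c0)) * (M * m)"
      using Eb[OF r] C2 c0 r by (intro mult_mono) auto
    then show "cmod (coef (s + \<delta>) s r * complex_of_real (E r)) \<le> 2 * C2 * M * m / (r + c0) + 0 / sqrt (r + c0) + 0"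
      by (simp add: norm_mult)
  qed (use u \<delta> C2 M_ge_1 coef_cont[OF s1 s2] in \<open>auto simp: m_def\<close>)
  moreover have "D 0 = 0" using flow_reduced_0[OF s1] flow_reduced_0[OF s2] by (simp add: D_def)
  ultimately have "cmod (D u) \<le> exp (16 * M^2 * T) * (2 * C2 * M * m / (6/25))" by simp
  then have "cmod (D u) + \<bar>E u\<bar> \<le> CA * m"
    using Eb[of u] u by (simp add: CA_def Cw_def algebra_simps)
  then show ?thesis
    unfolding fdiff m_def using norm_triangle_ineq[of "D u" "complex_of_real (E u)"] by simp
qed

end

section \<open>The linearised equation\<close>

context loewner_driver
begin

lemma powr_le_max_1: "0 \<le> r \<Longrightarrow> r \<le> T \<Longrightarrow> r powr \<alpha> \<le> max 1 T"
proof (cases "r \<le> 1")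
  case True
  assume "0 \<le> r"
  then show ?thesis using True \<alpha> powr_le1[of \<alpha> r] by simp
next
  case False
  assume "0 \<le> r" "r \<le> T"
  have "r powr \<alpha> \<le> r powr 1" using False \<alpha> by (intro powr_mono) auto
  then show ?thesis using False \<open>r \<le> T\<close> by simp
qed

definition dlam_gap :: "real \<Rightarrow> real \<Rightarrow> real" where
  "dlam_gap s r = dlam s - dlam (s - r)"

lemma dlam_gap_le: "0 \<le> r \<Longrightarrow> r \<le> s \<Longrightarrow> s \<le> T \<Longrightarrow> \<bar>dlam_gap s r\<bar> \<le> M * r powr \<alpha>"
  unfolding dlam_gap_def using dlam_holder[of s "s - r"] by simp

lemma dlam_gap_cont: "0 \<le> s \<Longrightarrow> s \<le> T \<Longrightarrow> continuous_on {0..s} (\<lambda>r. complex_of_real (dlam_gap s r))"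
  unfolding dlam_gap_def using dlam_reflect_cont by (intro continuous_intros) auto

lemma dlam_gap_diff_le:
  assumes "0 \<le> r" "r \<le> s" "0 \<le> \<delta>" "s + \<delta> \<le> T"
  shows "\<bar>dlam_gap (s + \<delta>) r - dlam_gap s r\<bar> \<le> 2 * M * \<delta> powr \<alpha>"
  using dlam_holder[of "s + \<delta>" s] dlam_holder[of "s + \<delta> - r" "s - r"] assms
  unfolding dlam_gap_def by (simp add: abs_le_iff)

text \<open>The reduced flow \<open>G\<close> satisfies \<open>\<partial>\<^sub>r \<partial>\<^sub>s G = a \<partial>\<^sub>s f\<close> with \<open>a = 2 / f^2\<close>, so \<open>w = \<partial>\<^sub>s G = \<partial>\<^sub>s f - dlam_gap\<close>
  should solve \<open>w' = a (w + dlam_gap)\<close>, \<open>w 0 = 0\<close>. \<open>var_sol\<close> is that solution, by variation of constants,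
  and \<open>flow_ds = var_sol + dlam_gap\<close> is the candidate for \<open>\<partial>\<^sub>s f\<close>.\<close>
definition var_sol :: "real \<Rightarrow> real \<Rightarrow> complex" where
  "var_sol s r = exp (integral {0..r} (coef s s)) *
     integral {0..r} (\<lambda>v. exp (- integral {0..v} (coef s s)) * (coef s s v * complex_of_real (dlam_gap s v)))"

definition flow_ds :: "real \<Rightarrow> real \<Rightarrow> complex" where
  "flow_ds s r = var_sol s r + complex_of_real (dlam_gap s r)"

lemma var_sol_0: "var_sol s 0 = 0" by (simp add: var_sol_def)

lemma var_sol_deriv:
  assumes s: "0 \<le> s" "s \<le> T" and r: "r \<in> {0..s}"
  shows "(var_sol s has_vector_derivative coef s s r * flow_ds s r) (at r within {0..s})"
proof -
  define A where "A r = integral {0..r} (coef s s)" for r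
  define b where "b v = exp (- A v) * (coef s s v * complex_of_real (dlam_gap s v))" for v
  have dA: "(A has_vector_derivative coef s s t) (at t within {0..s})" if "t \<in> {0..s}" for t
    unfolding A_def by (rule integral_has_vector_derivative[OF coef_cont that]) (use s in auto)
  have "continuous_on {0..s} b"
    unfolding b_def using continuous_on_vector_derivative[OF dA] coef_cont[of s s s] dlam_gap_cont[OF s] s
    by (intro continuous_intros) auto
  from has_vector_derivative_mult[OF has_vector_derivative_exp_comp[OF dA[OF r]]
      integral_has_vector_derivative[OF this r]]
  have "(var_sol s has_vector_derivative exp (A r) * b r + coef s s r * exp (A r) * integral {0..r} b)
      (at r within {0..s})"
    by (simp add: var_sol_def[abs_def] A_def[abs_def] b_def[abs_def])
  moreover have "exp (A r) * b r + coef s s r * exp (A r) * integral {0..r} b = coef s s r * flow_ds s r"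
  proof -
    have "exp (A r) * b r = coef s s r * complex_of_real (dlam_gap s r)"
      by (simp add: b_def exp_minus field_simps)
    moreover have "var_sol s r = exp (A r) * integral {0..r} b"
      by (simp add: var_sol_def A_def b_def[abs_def])
    ultimately show ?thesis by (simp add: flow_ds_def algebra_simps)
  qed
  ultimately show ?thesis by simp
qed

lemma var_sol_le:
  assumes s: "0 \<le> s" "s \<le> T" and u: "0 \<le> u" "u \<le> s"
  shows "cmod (var_sol s u) \<le> Cw * u powr \<alpha>"
proof -
  have sub: "{0..u} \<subseteq> {0..s}" using u by auto
  have "cmod (var_sol s u) \<le> exp (16 * M^2 * T) *
      (cmod (var_sol s 0) + (2 * C2 * M * u powr \<alpha>) / (6/25) + 2 * 0 * sqrt (T + c0) + 0 * T)"
  proof (rule linear_ode_norm_bound_log_weight[OF u(1) _ c0(1), where a = "coef s s"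
        and b = "\<lambda>r. coef s s r * complex_of_real (dlam_gap s r)"])
    fix r assume r: "r \<in> {0..u}"
    then have r': "r \<in> {0..s}" using sub by auto
    show "(var_sol s has_vector_derivative coef s s r * var_sol s r + coef s s r * complex_of_real (dlam_gap s r))
        (at r within {0..u})"
      using has_vector_derivative_within_subset[OF var_sol_deriv[OF s r'] sub]
      by (simp add: flow_ds_def algebra_simps)
    show "Re (coef s s r) \<le> 16 * M^2 - (6/25) / (r + c0)" by (rule Re_coef_le[OF s s]) (use r u in auto)
    have "cmod (coef s s r) \<le> 2 * C2 / (r + c0)" by (rule norm_coef_le[OF s s]) (use r u in auto)
    moreover have "\<bar>dlam_gap s r\<bar> \<le> M * u powr \<alpha>"
      using dlam_gap_le[of r s] r u s M_ge_1 \<alpha> powr_mono2[of \<alpha> r u]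
      by (smt (verit) atLeastAtMost_iff mult_left_mono)
    ultimately have "cmod (coef s s r) * \<bar>dlam_gap s r\<bar> \<le> (2 * C2 / (r + c0)) * (M * u powr \<alpha>)"
      using C2 c0 r by (intro mult_mono) auto
    then show "cmod (coef s s r * complex_of_real (dlam_gap s r))
        \<le> 2 * C2 * M * u powr \<alpha> / (r + c0) + 0 / sqrt (r + c0) + 0"
      by (simp add: norm_mult)
  qed (use u s C2 M_ge_1 coef_cont[OF s s u(2) u(2)] in auto)
  then have "cmod (var_sol s u) \<le> exp (16 * M^2 * T) * (2 * C2 * M * u powr \<alpha> / (6/25))"
    by (simp add: var_sol_0)
  also have "\<dots> = Cw * u powr \<alpha>" by (simp add: Cw_def field_simps)
  finally show ?thesis .
qed

lemma flow_ds_le: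
  assumes s: "0 \<le> s" "s \<le> T" and u: "0 \<le> u" "u \<le> s"
  shows "cmod (flow_ds s u) \<le> CA * u powr \<alpha>"
proof -
  have "cmod (flow_ds s u) \<le> cmod (var_sol s u) + \<bar>dlam_gap s u\<bar>"
    unfolding flow_ds_def using norm_triangle_ineq[of "var_sol s u" "complex_of_real (dlam_gap s u)"] by simp
  also have "\<dots> \<le> Cw * u powr \<alpha> + M * u powr \<alpha>"
    using var_sol_le[OF s u] dlam_gap_le[of u s] u s by (intro add_mono) auto
  finally show ?thesis by (simp add: CA_def algebra_simps)
qed

lemma inverse_norm_flow_le:
  assumes s: "0 \<le> s" "s \<le> T" and r: "0 \<le> r" "r \<le> s"
  shows "1 / cmod (flow s r) \<le> sqrt (C2 / (r + c0))"
proof -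
  have "cmod (coef s s r) \<le> 2 * C2 / (r + c0)" by (rule norm_coef_le[OF s s r r(2)])
  then have "(1 / cmod (flow s r))^2 \<le> C2 / (r + c0)"
    by (simp add: coef_def norm_divide norm_mult power2_eq_square)
  then show ?thesis by (simp add: real_le_rsqrt)
qed

lemma coef_diff_le:
  assumes s1: "0 \<le> s1" "s1 \<le> T" and s2: "0 \<le> s2" "s2 \<le> T" and r: "0 \<le> r" "r \<le> s1" "r \<le> s2"
  shows "cmod (coef s1 s1 r - coef s2 s2 r)
    \<le> 4 * cmod (flow s1 r - flow s2 r) * (C2 / (r + c0)) * sqrt (C2 / (r + c0))"
proof -
  define z1 z2 where "z1 = flow s1 r" and "z2 = flow s2 r"
  have nz: "z1 \<noteq> 0" "z2 \<noteq> 0" unfolding z1_def z2_def using flow_nonzero[OF s1] flow_nonzero[OF s2] r by auto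
  define n1 n2 where "n1 = cmod z1" and "n2 = cmod z2"
  have n: "0 < n1" "0 < n2" using nz by (auto simp: n1_def n2_def)
  define Q where "Q = sqrt (C2 / (r + c0))"
  have P: "1 / (n1 * n2) \<le> C2 / (r + c0)"
    using norm_coef_le[OF s1 s2 r] by (simp add: n1_def n2_def z1_def z2_def coef_def norm_divide norm_mult)
  have Q: "1 / n1 \<le> Q" "1 / n2 \<le> Q"
    unfolding n1_def n2_def z1_def z2_def Q_def using inverse_norm_flow_le[OF s1] inverse_norm_flow_le[OF s2] r
    by auto
  have "coef s1 s1 r - coef s2 s2 r = 2 * (z2 - z1) * (z2 + z1) / (z1 * z1 * (z2 * z2))"
    using nz by (simp add: coef_def z1_def[symmetric] z2_def[symmetric] field_simps)
  then have "cmod (coef s1 s1 r - coef s2 s2 r) = 2 * cmod (z2 - z1) * cmod (z2 + z1) / (n1 * n1 * (n2 * n2))"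
    unfolding n1_def n2_def by (simp only: norm_divide norm_mult) simp
  also have "\<dots> \<le> 2 * cmod (z2 - z1) * (n1 + n2) / (n1 * n1 * (n2 * n2))"
    using n norm_triangle_ineq[of z2 z1] unfolding n1_def n2_def
    by (intro divide_right_mono mult_left_mono) auto
  also have "\<dots> = 2 * cmod (z2 - z1) * ((1 / (n1 * n2)) * (1 / n1 + 1 / n2))"
    using n by (simp add: field_simps)
  also have "\<dots> \<le> 2 * cmod (z2 - z1) * ((C2 / (r + c0)) * (Q + Q))"
    using P Q n C2 c0 r by (intro mult_left_mono mult_mono add_mono) auto
  also have "\<dots> = 4 * cmod (z1 - z2) * (C2 / (r + c0)) * Q"
    by (simp add: norm_minus_commute algebra_simps)
  finally show ?thesis unfolding Q_def z1_def z2_def .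
qed

definition "B2c = 4 * CA * C2 * sqrt C2 * CA * max 1 T"
definition "CB = exp (16 * M^2 * T) * (4 * C2 * M / (6/25) + 2 * B2c * sqrt (T + 1)) + 2 * M"

lemma B2c: "0 \<le> B2c" using CA C2 by (simp add: B2c_def)

text \<open>Here the bound \<open>|f(s+\<delta>) - f(s)| \<le> CA r \<delta>^\<alpha>\<close> pays for the factor \<open>1 / (r + c0)^(3/2)\<close> in the
  difference of the coefficients, leaving an integrable singularity \<open>1 / sqrt (r + c0)\<close>.\<close>
lemma coef_diff_mult_flow_ds_le:
  assumes r: "0 \<le> r" "r \<le> s" and \<delta>: "0 \<le> \<delta>" "s + \<delta> \<le> T"
  shows "cmod ((coef (s + \<delta>) (s + \<delta>) r - coef s s r) * flow_ds s r) \<le> B2c * \<delta> powr \<alpha> / sqrt (r + c0)"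
proof -
  have s1: "0 \<le> s + \<delta>" "s + \<delta> \<le> T" and s2: "0 \<le> s" "s \<le> T" using r \<delta> by auto
  have rc: "0 < r + c0" using r c0 by auto
  have "cmod (flow (s + \<delta>) r - flow s r) \<le> CA * min (r * \<delta> powr \<alpha>) (\<delta> * r powr \<alpha>)"
    by (rule flow_diff_le) (use r \<delta> in auto)
  also have "\<dots> \<le> CA * (r * \<delta> powr \<alpha>)" using CA by (intro mult_left_mono) auto
  finally have fd: "cmod (flow (s + \<delta>) r - flow s r) \<le> CA * (r * \<delta> powr \<alpha>)" .
  have Wb: "cmod (flow_ds s r) \<le> CA * max 1 T"
    using flow_ds_le[OF s2 r] powr_le_max_1[of r] r s2 CA by (smt (verit) mult_left_mono)
  have "cmod (coef (s + \<delta>) (s + \<delta>) r - coef s s r)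
      \<le> 4 * cmod (flow (s + \<delta>) r - flow s r) * (C2 / (r + c0)) * sqrt (C2 / (r + c0))"
    by (rule coef_diff_le[OF s1 s2]) (use r \<delta> in auto)
  also have "\<dots> \<le> 4 * (CA * (r * \<delta> powr \<alpha>)) * (C2 / (r + c0)) * sqrt (C2 / (r + c0))"
    using fd C2 rc by (intro mult_right_mono) auto
  finally have "cmod ((coef (s + \<delta>) (s + \<delta>) r - coef s s r) * flow_ds s r)
      \<le> (4 * (CA * (r * \<delta> powr \<alpha>)) * (C2 / (r + c0)) * sqrt (C2 / (r + c0))) * (CA * max 1 T)"
    unfolding norm_mult using Wb CA C2 rc r by (intro mult_mono) auto
  also have "\<dots> = B2c * \<delta> powr \<alpha> * (r / (r + c0)) / sqrt (r + c0)"
    using rc by (simp add: B2c_def real_sqrt_divide field_simps)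
  also have "\<dots> \<le> B2c * \<delta> powr \<alpha> * 1 / sqrt (r + c0)"
    by (intro divide_right_mono mult_left_mono) (use rc B2c c0 in auto)
  finally show ?thesis by simp
qed

lemma flow_ds_diff_le:
  assumes u: "0 \<le> u" "u \<le> s" and \<delta>: "0 \<le> \<delta>" "s + \<delta> \<le> T"
  shows "cmod (flow_ds (s + \<delta>) u - flow_ds s u) \<le> CB * \<delta> powr \<alpha>"
proof -
  have s1: "0 \<le> s + \<delta>" "s + \<delta> \<le> T" and s2: "0 \<le> s" "s \<le> T" using u \<delta> by auto
  define Dd where "Dd r = dlam_gap (s + \<delta>) r - dlam_gap s r" for r
  define D where "D r = var_sol (s + \<delta>) r - var_sol s r" for r
  define a where "a = coef (s + \<delta>) (s + \<delta>)"
  define b where "b r = a r * complex_of_real (Dd r) + (a r - coef s s r) * flow_ds s r" for r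
  have sub1: "{0..u} \<subseteq> {0..s + \<delta>}" and sub2: "{0..u} \<subseteq> {0..s}" using u \<delta> by auto
  have "cmod (D u) \<le> exp (16 * M^2 * T) *
      (cmod (D 0) + (4 * C2 * M * \<delta> powr \<alpha>) / (6/25) + 2 * (B2c * \<delta> powr \<alpha>) * sqrt (T + c0) + 0 * T)"
  proof (rule linear_ode_norm_bound_log_weight[OF u(1) _ c0(1), where a = a and b = b])
    fix r assume r: "r \<in> {0..u}"
    have r1: "r \<in> {0..s + \<delta>}" and r2: "r \<in> {0..s}" using r sub1 sub2 by auto
    show "(D has_vector_derivative a r * D r + b r) (at r within {0..u})"
      unfolding D_def
      using has_vector_derivative_diff[OF has_vector_derivative_within_subset[OF var_sol_deriv[OF s1 r1] sub1]
            has_vector_derivative_within_subset[OF var_sol_deriv[OF s2 r2] sub2]]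
      by (simp add: a_def b_def Dd_def flow_ds_def algebra_simps)
    show "Re (a r) \<le> 16 * M^2 - (6/25) / (r + c0)" unfolding a_def by (rule Re_coef_le[OF s1 s1]) (use r1 in auto)
    have rc: "0 < r + c0" using r c0 by auto
    have "cmod (a r) \<le> 2 * C2 / (r + c0)" unfolding a_def by (rule norm_coef_le[OF s1 s1]) (use r1 in auto)
    then have "cmod (a r) * \<bar>Dd r\<bar> \<le> (2 * C2 / (r + c0)) * (2 * M * \<delta> powr \<alpha>)"
      using dlam_gap_diff_le[of r s \<delta>] r u \<delta> C2 rc unfolding Dd_def by (intro mult_mono) auto
    moreover have "cmod ((a r - coef s s r) * flow_ds s r) \<le> B2c * \<delta> powr \<alpha> / sqrt (r + c0)"
      unfolding a_def by (rule coef_diff_mult_flow_ds_le) (use r u \<delta> in auto)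
    ultimately show "cmod (b r) \<le> 4 * C2 * M * \<delta> powr \<alpha> / (r + c0) + B2c * \<delta> powr \<alpha> / sqrt (r + c0) + 0"
      using norm_triangle_ineq[of "a r * complex_of_real (Dd r)" "(a r - coef s s r) * flow_ds s r"]
      unfolding b_def by (simp add: norm_mult)
  qed (use u \<delta> C2 M_ge_1 B2c coef_cont[OF s1 s1] in \<open>auto simp: a_def\<close>)
  moreover have "D 0 = 0" by (simp add: D_def var_sol_0)
  ultimately have "cmod (D u) \<le> exp (16 * M^2 * T) * ((4 * C2 * M / (6/25) + 2 * B2c * sqrt (T + c0)) * \<delta> powr \<alpha>)"
    by (simp add: algebra_simps)
  also have "\<dots> \<le> exp (16 * M^2 * T) * ((4 * C2 * M / (6/25) + 2 * B2c * sqrt (T + 1)) * \<delta> powr \<alpha>)"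
    using c0 B2c by (intro mult_left_mono mult_right_mono add_mono) auto
  finally have "cmod (D u) + \<bar>Dd u\<bar> \<le> CB * \<delta> powr \<alpha>"
    using dlam_gap_diff_le[of u s \<delta>] u \<delta> unfolding Dd_def by (simp add: CB_def algebra_simps)
  moreover have "flow_ds (s + \<delta>) u - flow_ds s u = D u + complex_of_real (Dd u)"
    by (simp add: flow_ds_def D_def Dd_def)
  ultimately show ?thesis using norm_triangle_ineq[of "D u" "complex_of_real (Dd u)"] by simp
qed

end

section \<open>Differentiability in the starting time\<close>

context loewner_driver
begin

lemma lam_taylor:
  assumes a: "a \<in> {0..T}" and b: "b \<in> {0..T}"
  shows "\<bar>lam b - lam a - (b - a) * dlam a\<bar> \<le> M * \<bar>b - a\<bar> powr \<alpha> * \<bar>b - a\<bar>"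
proof -
  define f where "f t = lam t - t * dlam a" for t
  have key: "\<bar>f y - f x\<bar> \<le> M * \<bar>b - a\<bar> powr \<alpha> * (y - x)"
    if xy: "x \<le> y" "{x..y} \<subseteq> {0..T}" "\<And>t. t \<in> {x..y} \<Longrightarrow> \<bar>t - a\<bar> \<le> \<bar>b - a\<bar>" for x y
  proof -
    have "\<bar>f y - f x\<bar> \<le> M * \<bar>b - a\<bar> powr \<alpha> * y - M * \<bar>b - a\<bar> powr \<alpha> * x"
    proof (rule abs_diff_le_if_DERIV_le[where f' = "\<lambda>t. dlam t - 1 * dlam a" and \<phi>' = "\<lambda>_. M * \<bar>b - a\<bar> powr \<alpha>"])
      fix t assume t: "t \<in> {x..y}"
      have tT: "t \<in> {0..T}" using t xy by auto
      show "(f has_real_derivative dlam t - 1 * dlam a) (at t within {x..y})"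
        unfolding f_def
        by (rule DERIV_diff[OF DERIV_subset[OF lam_deriv[OF tT] xy(2)] DERIV_cmult_right[OF DERIV_ident]])
      show "((\<lambda>t. M * \<bar>b - a\<bar> powr \<alpha> * t) has_real_derivative M * \<bar>b - a\<bar> powr \<alpha>) (at t within {x..y})"
        using DERIV_cmult[OF DERIV_ident, of "M * \<bar>b - a\<bar> powr \<alpha>"] by simp
      have "\<bar>dlam t - dlam a\<bar> \<le> M * \<bar>t - a\<bar> powr \<alpha>" by (rule dlam_holder[OF tT a])
      also have "\<dots> \<le> M * \<bar>b - a\<bar> powr \<alpha>" using xy(3)[OF t] M_ge_1 \<alpha> by (intro mult_left_mono powr_mono2) auto
      finally show "\<bar>dlam t - 1 * dlam a\<bar> \<le> M * \<bar>b - a\<bar> powr \<alpha>" by simp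
    qed (rule xy(1))
    then show ?thesis by (simp add: algebra_simps)
  qed
  show ?thesis
  proof (cases "a \<le> b")
    case True
    have "\<bar>f b - f a\<bar> \<le> M * \<bar>b - a\<bar> powr \<alpha> * (b - a)" by (rule key) (use True a b in auto)
    then show ?thesis using True by (simp add: f_def algebra_simps)
  next
    case False
    have "\<bar>f a - f b\<bar> \<le> M * \<bar>b - a\<bar> powr \<alpha> * (a - b)" by (rule key) (use False a b in auto)
    then show ?thesis using False by (simp add: f_def algebra_simps abs_minus_commute)
  qed
qed

lemma lam_incr_taylor:
  assumes r: "0 \<le> r" "r \<le> s" "r \<le> s'" and s: "s \<le> T" "s' \<le> T"
  shows "\<bar>lam_incr s' r - lam_incr s r - (s' - s) * dlam_gap s r\<bar> \<le> 2 * M * (\<bar>s' - s\<bar> powr \<alpha> * \<bar>s' - s\<bar>)"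
proof -
  have "\<bar>lam s' - lam s - (s' - s) * dlam s\<bar> \<le> M * \<bar>s' - s\<bar> powr \<alpha> * \<bar>s' - s\<bar>"
    by (rule lam_taylor) (use r s in auto)
  moreover have "\<bar>lam (s' - r) - lam (s - r) - ((s' - r) - (s - r)) * dlam (s - r)\<bar>
      \<le> M * \<bar>(s' - r) - (s - r)\<bar> powr \<alpha> * \<bar>(s' - r) - (s - r)\<bar>"
    by (rule lam_taylor) (use r s in auto)
  ultimately show ?thesis by (simp add: lam_incr_def dlam_gap_def abs_le_iff algebra_simps)
qed

lemma flow_lipschitz:
  assumes "0 \<le> r" "r \<le> s" "s \<le> T" "r \<le> s'" "s' \<le> T"
  shows "cmod (flow s' r - flow s r) \<le> CA * max 1 T * \<bar>s' - s\<bar>"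
proof -
  have *: "cmod (flow s2 r - flow s1 r) \<le> CA * max 1 T * (s2 - s1)"
    if "r \<le> s1" "s1 \<le> s2" "s2 \<le> T" for s1 s2
  proof -
    have "cmod (flow (s1 + (s2 - s1)) r - flow s1 r) \<le> CA * min (r * (s2 - s1) powr \<alpha>) ((s2 - s1) * r powr \<alpha>)"
      by (rule flow_diff_le) (use that assms in auto)
    also have "\<dots> \<le> CA * ((s2 - s1) * max 1 T)"
      using powr_le_max_1[of r] that assms CA by (intro mult_left_mono min.coboundedI2 mult_left_mono) auto
    finally show ?thesis by (simp add: algebra_simps)
  qed
  show ?thesis
    using *[of s s'] *[of s' s] assms by (cases "s \<le> s'") (auto simp: norm_minus_commute)
qed

lemma lam_incr_lipschitz:
  assumes "0 \<le> r" "r \<le> s" "s \<le> T" "r \<le> s'" "s' \<le> T"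
  shows "\<bar>lam_incr s' r - lam_incr s r\<bar> \<le> M * max 1 T * \<bar>s' - s\<bar>"
proof -
  have *: "\<bar>lam_incr s2 r - lam_incr s1 r\<bar> \<le> M * max 1 T * (s2 - s1)"
    if "r \<le> s1" "s1 \<le> s2" "s2 \<le> T" for s1 s2
  proof -
    have "\<bar>lam_incr (s1 + (s2 - s1)) r - lam_incr s1 r\<bar> \<le> M * r powr \<alpha> * (s2 - s1)"
      by (rule lam_incr_diff_le_shift) (use that assms in auto)
    also have "\<dots> \<le> M * max 1 T * (s2 - s1)"
      using powr_le_max_1[of r] that assms M_ge_1 by (intro mult_right_mono mult_left_mono) auto
    finally show ?thesis by simp
  qed
  show ?thesis
    using *[of s s'] *[of s' s] assms by (cases "s \<le> s'") (auto simp: abs_minus_commute)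
qed

lemma coef_cross_diff_le:
  assumes r: "0 \<le> r" "r \<le> s" "r \<le> s'" and s: "s \<le> T" "s' \<le> T"
  shows "cmod (coef s' s r - coef s s r) \<le> 2 * (CA * max 1 T * \<bar>s' - s\<bar>) / \<epsilon>^3"
proof -
  have s1: "0 \<le> s'" "s' \<le> T" and s2: "0 \<le> s" "s \<le> T" and r1: "r \<in> {0..s'}" and r2: "r \<in> {0..s}"
    using r s by auto
  have e: "\<epsilon> \<le> cmod (flow s' r)" "\<epsilon> \<le> cmod (flow s r)"
    using norm_flow_ge_eps[OF s1 r1] norm_flow_ge_eps[OF s2 r2] by auto
  have "coef s' s r - coef s s r = 2 * (flow s r - flow s' r) / (flow s' r * flow s r * flow s r)"
    using flow_nonzero[OF s1 r1] flow_nonzero[OF s2 r2] by (simp add: coef_def field_simps)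
  then have "cmod (coef s' s r - coef s s r)
      = 2 * cmod (flow s r - flow s' r) / (cmod (flow s' r) * cmod (flow s r) * cmod (flow s r))"
    by (simp only: norm_divide norm_mult) simp
  also have "\<dots> \<le> 2 * (CA * max 1 T * \<bar>s' - s\<bar>) / (\<epsilon> * \<epsilon> * \<epsilon>)"
  proof (rule frac_le)
    show "2 * cmod (flow s r - flow s' r) \<le> 2 * (CA * max 1 T * \<bar>s' - s\<bar>)"
      using flow_lipschitz[OF r(1,3) s(2) r(2) s(1)] by (simp add: norm_minus_commute abs_minus_commute)
    show "\<epsilon> * \<epsilon> * \<epsilon> \<le> cmod (flow s' r) * cmod (flow s r) * cmod (flow s r)"
      using e \<epsilon> by (intro mult_mono) auto
  qed (use CA \<epsilon> in auto)
  finally show ?thesis by (simp add: power3_eq_cube)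
qed

lemma norm_coef_le_eps:
  assumes "0 \<le> s" "s \<le> T" "r \<in> {0..s}"
  shows "cmod (coef s s r) \<le> 2 / \<epsilon>^2"
proof -
  have "\<epsilon> * \<epsilon> \<le> cmod (flow s r) * cmod (flow s r)"
    using norm_flow_ge_eps[OF assms] \<epsilon> by (intro mult_mono) auto
  then have "2 / (cmod (flow s r) * cmod (flow s r)) \<le> 2 / (\<epsilon> * \<epsilon>)"
    by (rule frac_le[rotated 3]) (use \<epsilon> in auto)
  then show ?thesis by (simp add: coef_def norm_divide norm_mult power2_eq_square)
qed

definition "Cd1 = 2 * CA * CA * (max 1 T)^2 / \<epsilon>^3"
definition "Cd2 = 4 * M / \<epsilon>^2"

lemma linearization_forcing_le:
  assumes r: "0 \<le> r" "r \<le> s" "r \<le> s'" and s: "s \<le> T" "s' \<le> T"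
  defines "h \<equiv> s' - s" and "E \<equiv> lam_incr s' r - lam_incr s r"
  shows "cmod ((coef s' s r - coef s s r) * (complex_of_real h * var_sol s r + complex_of_real E)
      + coef s s r * (complex_of_real E - complex_of_real h * complex_of_real (dlam_gap s r)))
    \<le> Cd1 * h^2 + Cd2 * (\<bar>h\<bar> powr \<alpha> * \<bar>h\<bar>)"
proof -
  have "cmod (var_sol s r) \<le> Cw * max 1 T"
    using var_sol_le[of s r] powr_le_max_1[of r] r s Cw by (smt (verit) mult_left_mono)
  moreover have "\<bar>E\<bar> \<le> M * max 1 T * \<bar>h\<bar>"
    unfolding E_def h_def by (rule lam_incr_lipschitz) (use r s in auto)
  ultimately have hw: "cmod (complex_of_real h * var_sol s r + complex_of_real E) \<le> \<bar>h\<bar> * (CA * max 1 T)"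
    using norm_triangle_ineq[of "complex_of_real h * var_sol s r" "complex_of_real E"]
    by (simp add: norm_mult CA_def algebra_simps) (smt (verit) abs_ge_zero mult_left_mono)
  have "cmod (coef s' s r - coef s s r) \<le> 2 * (CA * max 1 T * \<bar>h\<bar>) / \<epsilon>^3"
    unfolding h_def by (rule coef_cross_diff_le[OF r s])
  then have t1: "cmod ((coef s' s r - coef s s r) * (complex_of_real h * var_sol s r + complex_of_real E))
      \<le> (2 * (CA * max 1 T * \<bar>h\<bar>) / \<epsilon>^3) * (\<bar>h\<bar> * (CA * max 1 T))"
    unfolding norm_mult by (rule mult_mono[OF _ hw]) (use CA \<epsilon> in auto)
  have "\<bar>E - h * dlam_gap s r\<bar> \<le> 2 * M * (\<bar>h\<bar> powr \<alpha> * \<bar>h\<bar>)"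
    unfolding E_def h_def by (rule lam_incr_taylor[OF r s])
  with norm_coef_le_eps[of s r]
  have t2: "cmod (coef s s r * (complex_of_real E - complex_of_real h * complex_of_real (dlam_gap s r)))
      \<le> (2 / \<epsilon>^2) * (2 * M * (\<bar>h\<bar> powr \<alpha> * \<bar>h\<bar>))"
    unfolding norm_mult using r s by (intro mult_mono) (auto simp flip: of_real_mult of_real_diff)
  have "(2 * (CA * max 1 T * \<bar>h\<bar>) / \<epsilon>^3) * (\<bar>h\<bar> * (CA * max 1 T))
      + (2 / \<epsilon>^2) * (2 * M * (\<bar>h\<bar> powr \<alpha> * \<bar>h\<bar>)) = Cd1 * h^2 + Cd2 * (\<bar>h\<bar> powr \<alpha> * \<bar>h\<bar>)"
    by (simp add: Cd1_def Cd2_def power2_eq_square algebra_simps)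
  with t1 t2 show ?thesis using norm_triangle_ineq by (smt (verit))
qed

text \<open>The remainder \<open>D\<close> of the first-order expansion of the reduced flow in \<open>s\<close> solves
  \<open>D' = a D + b\<close> with a forcing \<open>b\<close> of order \<open>h^2 + |h|^(1+\<alpha>)\<close>; here only the crude bound \<open>Re a \<le> 16 M^2\<close> is used.\<close>
lemma flow_linearization_error:
  assumes u: "0 \<le> u" "u \<le> s" "s \<le> T" and s': "u \<le> s'" "s' \<le> T"
  shows "cmod (flow s' u - flow s u - complex_of_real (s' - s) * flow_ds s u)
     \<le> (exp (16 * M^2 * T) * T * Cd1 * \<bar>s' - s\<bar> + (exp (16 * M^2 * T) * T * Cd2 + 2 * M) * \<bar>s' - s\<bar> powr \<alpha>)
        * \<bar>s' - s\<bar>"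
proof -
  define h where "h = s' - s"
  have s1: "0 \<le> s'" "s' \<le> T" and s2: "0 \<le> s" "s \<le> T" using u s' by auto
  define E where "E r = lam_incr s' r - lam_incr s r" for r
  define D where "D r = flow_reduced s' r - flow_reduced s r - complex_of_real h * var_sol s r" for r
  define b where "b r = (coef s' s r - coef s s r) * (complex_of_real h * var_sol s r + complex_of_real (E r))
      + coef s s r * (complex_of_real (E r) - complex_of_real h * complex_of_real (dlam_gap s r))" for r
  have fdiff: "flow s' r - flow s r = D r + complex_of_real h * var_sol s r + complex_of_real (E r)" for r
    by (simp add: D_def flow_reduced_def E_def)
  have "cmod (D u) \<le> exp (16 * M^2 * T) * (cmod (D 0) + 0 / (6/25) + 2 * 0 * sqrt (T + c0)
      + (Cd1 * h^2 + Cd2 * (\<bar>h\<bar> powr \<alpha> * \<bar>h\<bar>)) * T)"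
  proof (rule linear_ode_norm_bound_log_weight[OF u(1) _ c0(1), where a = "coef s' s" and b = b])
    fix r assume r: "r \<in> {0..u}"
    have "(D has_vector_derivative coef s' s r * (flow s' r - flow s r) - complex_of_real h * (coef s s r * flow_ds s r))
        (at r within {0..u})"
      unfolding D_def[abs_def] using r u s'
      by (intro has_vector_derivative_diff flow_reduced_diff_deriv[OF s1 s2 r s'(1) u(2)]
          has_vector_derivative_mult_right has_vector_derivative_within_subset[OF var_sol_deriv[OF s2]]) auto
    moreover have "coef s' s r * (flow s' r - flow s r) - complex_of_real h * (coef s s r * flow_ds s r)
        = coef s' s r * D r + b r"
      unfolding fdiff b_def flow_ds_def by (simp add: algebra_simps)
    ultimately show "(D has_vector_derivative coef s' s r * D r + b r) (at r within {0..u})" by simp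
    show "Re (coef s' s r) \<le> 16 * M^2 - (6/25) / (r + c0)"
      by (rule Re_coef_le[OF s1 s2]) (use r u s' in auto)
    have "cmod (b r) \<le> Cd1 * h^2 + Cd2 * (\<bar>h\<bar> powr \<alpha> * \<bar>h\<bar>)"
      unfolding b_def E_def h_def by (rule linearization_forcing_le) (use r u s' in auto)
    then show "cmod (b r) \<le> 0 / (r + c0) + 0 / sqrt (r + c0) + (Cd1 * h^2 + Cd2 * (\<bar>h\<bar> powr \<alpha> * \<bar>h\<bar>))"
      by simp
  qed (use u s' CA M_ge_1 \<epsilon> coef_cont[OF s1 s2 s'(1) u(2)] in \<open>auto simp: Cd1_def Cd2_def\<close>)
  moreover have "D 0 = 0" using flow_reduced_0[OF s1] flow_reduced_0[OF s2] by (simp add: D_def var_sol_0)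
  ultimately have "cmod (D u) \<le> exp (16 * M^2 * T) * T * (Cd1 * h^2 + Cd2 * (\<bar>h\<bar> powr \<alpha> * \<bar>h\<bar>))"
    by (simp add: algebra_simps)
  moreover have "flow s' u - flow s u - complex_of_real h * flow_ds s u
      = D u + complex_of_real (E u - h * dlam_gap s u)"
    unfolding fdiff by (simp add: flow_ds_def algebra_simps)
  moreover have "\<bar>E u - h * dlam_gap s u\<bar> \<le> 2 * M * (\<bar>h\<bar> powr \<alpha> * \<bar>h\<bar>)"
    unfolding E_def h_def by (rule lam_incr_taylor) (use u s' in auto)
  ultimately have "cmod (flow s' u - flow s u - complex_of_real h * flow_ds s u)
      \<le> exp (16 * M^2 * T) * T * (Cd1 * h^2 + Cd2 * (\<bar>h\<bar> powr \<alpha> * \<bar>h\<bar>)) + 2 * M * (\<bar>h\<bar> powr \<alpha> * \<bar>h\<bar>)"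
    using norm_triangle_ineq[of "D u" "complex_of_real (E u - h * dlam_gap s u)"]
    by (simp del: of_real_diff of_real_mult)
  also have "\<dots> = (exp (16 * M^2 * T) * T * Cd1 * \<bar>h\<bar> + (exp (16 * M^2 * T) * T * Cd2 + 2 * M) * \<bar>h\<bar> powr \<alpha>)
      * \<bar>h\<bar>"
  proof -
    define k where "k = \<bar>h\<bar>"
    have "h^2 = k * k" by (simp add: k_def power2_eq_square)
    then show ?thesis unfolding k_def[symmetric] by (simp only:) (simp add: algebra_simps)
  qed
  finally show ?thesis by (simp add: h_def)
qed

lemma flow_has_ds:
  assumes "0 \<le> u" "u \<le> s" "s \<le> T"
  shows "((\<lambda>s'. flow s' u) has_vector_derivative flow_ds s u) (at s within {u..T})"
proof (rule has_vector_derivative_if_remainder_le[OF \<alpha>(1)])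
  fix y assume "y \<in> {u..T}"
  then show "cmod (flow y u - flow s u - (y - s) *\<^sub>R flow_ds s u)
      \<le> (exp (16 * M^2 * T) * T * Cd1 * \<bar>y - s\<bar> + (exp (16 * M^2 * T) * T * Cd2 + 2 * M) * \<bar>y - s\<bar> powr \<alpha>)
        * \<bar>y - s\<bar>"
    using flow_linearization_error[of u s y] assms by (simp add: scaleR_conv_of_real)
qed (use T_pos CA M_ge_1 \<epsilon> in \<open>auto simp: Cd1_def Cd2_def\<close>)

lemma ds_fsol_eq_flow_ds:
  assumes u: "0 \<le> u" "u \<le> s" "s \<le> T" "u < T"
  shows "ds_fsol T dlam u s \<epsilon> = flow_ds s u"
proof -
  have "((\<lambda>s'. fsol dlam u s' \<epsilon>) has_vector_derivative flow_ds s u) (at s within {u..T})"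
  proof (rule has_vector_derivative_transform_within[OF flow_has_ds[OF u(1-3)] zero_less_one])
    fix s' assume "s' \<in> {u..T}"
    then show "flow s' u = fsol dlam u s' \<epsilon>" using fsol_eq_flow u by auto
  qed (use u in auto)
  then show ?thesis unfolding ds_fsol_def
    by (rule vector_derivative_within_closed_interval[OF u(4), rotated]) (use u in auto)
qed

end

context loewner_driver
begin

definition "C_final = max (2 * CA) CB"

lemma fsol_diff_le:
  assumes u: "0 \<le> u" "u \<le> s" and \<delta>: "0 \<le> \<delta>" "s + \<delta> \<le> T"
  shows "cmod (fsol dlam u (s + \<delta>) \<epsilon> - fsol dlam u s \<epsilon>) \<le> C_final * min (u * \<delta> powr \<alpha>) (\<delta> * u powr \<alpha>)"
proof -
  have "cmod (fsol dlam u (s + \<delta>) \<epsilon> - fsol dlam u s \<epsilon>) \<le> CA * min (u * \<delta> powr \<alpha>) (\<delta> * u powr \<alpha>)"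
    using flow_diff_le[OF u \<delta>] fsol_eq_flow[of u s] fsol_eq_flow[of u "s + \<delta>"] u \<delta> by simp
  also have "\<dots> \<le> C_final * min (u * \<delta> powr \<alpha>) (\<delta> * u powr \<alpha>)"
    using CA u \<delta> by (intro mult_right_mono) (auto simp: C_final_def)
  finally show ?thesis .
qed

lemma ds_fsol_diff_le:
  assumes u: "0 \<le> u" "u \<le> s" and \<delta>: "0 \<le> \<delta>" "s + \<delta> \<le> T"
  shows "cmod (ds_fsol T dlam u (s + \<delta>) \<epsilon> - ds_fsol T dlam u s \<epsilon>) \<le> C_final * min (u powr \<alpha>) (\<delta> powr \<alpha>)"
proof (cases "\<delta> = 0")
  case False
  have s1: "0 \<le> s + \<delta>" "s + \<delta> \<le> T" and s2: "0 \<le> s" "s \<le> T" using u \<delta> by auto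
  have "ds_fsol T dlam u (s + \<delta>) \<epsilon> - ds_fsol T dlam u s \<epsilon> = flow_ds (s + \<delta>) u - flow_ds s u"
    using ds_fsol_eq_flow_ds[of u "s + \<delta>"] ds_fsol_eq_flow_ds[of u s] u \<delta> False by simp
  moreover have "cmod (flow_ds (s + \<delta>) u - flow_ds s u) \<le> C_final * u powr \<alpha>"
  proof -
    have "cmod (flow_ds (s + \<delta>) u - flow_ds s u) \<le> CA * u powr \<alpha> + CA * u powr \<alpha>"
      using norm_triangle_ineq4[of "flow_ds (s + \<delta>) u" "flow_ds s u"] flow_ds_le[OF s1, of u] flow_ds_le[OF s2, of u]
        u \<delta> by simp
    also have "\<dots> = 2 * CA * u powr \<alpha>" by simp
    also have "\<dots> \<le> C_final * u powr \<alpha>" unfolding C_final_def by (rule mult_right_mono) auto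
    finally show ?thesis .
  qed
  moreover have "cmod (flow_ds (s + \<delta>) u - flow_ds s u) \<le> C_final * \<delta> powr \<alpha>"
    using flow_ds_diff_le[OF u \<delta>] by (smt (verit) C_final_def max.cobounded2 mult_right_mono powr_ge_zero)
  ultimately show ?thesis by (simp add: min_def)
qed (use CA in \<open>simp add: C_final_def\<close>)

end

lemma loewner_driverI:
  assumes "0 < T" "0 < \<alpha>" "\<alpha> \<le> 1" "C1alpha T \<alpha> M lam dlam" "0 < \<epsilon>" "\<epsilon> \<le> 1"
  shows "loewner_driver T (max M 1) \<alpha> lam dlam \<epsilon>"
proof
  have "M * \<bar>t - s\<bar> powr \<alpha> \<le> max M 1 * \<bar>t - s\<bar> powr \<alpha>" for t s :: real
    by (intro mult_right_mono) auto
  with assms show "\<And>t s. t \<in> {0..T} \<Longrightarrow> s \<in> {0..T} \<Longrightarrow> \<bar>dlam t - dlam s\<bar> \<le> max M 1 * \<bar>t - s\<bar> powr \<alpha>"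
    unfolding C1alpha_def by (meson order_trans)
qed (use assms in \<open>auto simp: C1alpha_def intro: max.coboundedI1\<close>)

theorem lemma3p3:
  fixes M T :: real
  assumes "0 < T"
  shows "\<exists>c::real. \<forall>\<alpha> lam dlam. 0 < \<alpha> \<and> \<alpha> \<le> 1 \<and> C1alpha T \<alpha> M lam dlam \<and> half_holder_le1 T lam \<longrightarrow>
    (\<forall>u s \<delta> \<epsilon>. 0 \<le> u \<and> u \<le> s \<and> 0 \<le> \<delta> \<and> s + \<delta> \<le> T \<and> 0 < \<epsilon> \<and> \<epsilon> \<le> 1 \<longrightarrow>
       cmod (fsol dlam u (s + \<delta>) \<epsilon> - fsol dlam u s \<epsilon>)
         \<le> c * min (u * \<delta> powr \<alpha>) (\<delta> * u powr \<alpha>) \<and>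
       cmod (ds_fsol T dlam u (s + \<delta>) \<epsilon> - ds_fsol T dlam u s \<epsilon>)
         \<le> c * (1 + \<epsilon> / \<alpha>) * min (u powr \<alpha>) (\<delta> powr \<alpha>))"
proof (intro exI[of _ "loewner_driver.C_final T (max M 1)"] allI impI conjI)
  fix \<alpha> :: real and lam dlam :: "real \<Rightarrow> real" and u s \<delta> \<epsilon> :: real
  assume H: "0 < \<alpha> \<and> \<alpha> \<le> 1 \<and> C1alpha T \<alpha> M lam dlam \<and> half_holder_le1 T lam"
    and P: "0 \<le> u \<and> u \<le> s \<and> 0 \<le> \<delta> \<and> s + \<delta> \<le> T \<and> 0 < \<epsilon> \<and> \<epsilon> \<le> 1"
  interpret loewner_driver T "max M 1" \<alpha> lam dlam \<epsilon>
    using H P assms by (intro loewner_driverI) auto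
  show "cmod (fsol dlam u (s + \<delta>) \<epsilon> - fsol dlam u s \<epsilon>) \<le> C_final * min (u * \<delta> powr \<alpha>) (\<delta> * u powr \<alpha>)"
    using fsol_diff_le P by blast
  have "0 \<le> C_final" using CA by (simp add: C_final_def)
  then have "C_final \<le> C_final * (1 + \<epsilon> / \<alpha>)"
    using mult_left_mono[of 1 "1 + \<epsilon> / \<alpha>" C_final] H P by simp
  then have "C_final * min (u powr \<alpha>) (\<delta> powr \<alpha>) \<le> C_final * (1 + \<epsilon> / \<alpha>) * min (u powr \<alpha>) (\<delta> powr \<alpha>)"
    by (rule mult_right_mono) simp
  with ds_fsol_diff_le P
  show "cmod (ds_fsol T dlam u (s + \<delta>) \<epsilon> - ds_fsol T dlam u s \<epsilon>)
      \<le> C_final * (1 + \<epsilon> / \<alpha>) * min (u powr \<alpha>) (\<delta> powr \<alpha>)"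
    by (meson order_trans)
qed
end
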